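(* Consider hotspot destination traffic on the ring network described in the context, with shortest-path routing, and the wavelength $\Lambda$ on which the hotspot $N$ is homed. Let $\ell\in\{1,\ldots,\eta\}$ be such that $|\mathcal{F}_\Lambda|=\ell$ has positive probability, and let $q_\beta^\ell$ denote the hotspot destination traffic measure conditioned on $|\mathcal{F}_\Lambda|=\ell$. Then \[ \frac{1}{\ell+1}\Big(1-\frac{1}{\ell\eta}\Big)\le q_\beta^{\ell}(\mathcal{G}_\Lambda=0)\le \frac{1}{\ell+1}\Big(1+\frac{1}{\eta}\Big). \]
   Context: Network: a bidirectional ring with $N$ nodes labeled $1,\ldots,N$ clockwise (labels modulo $N$, node $N$ = node $0$ is the hotspot), $\Lambda$ wavelengths, $\eta:=N/\Lambda$ a positive integer; node $n$ is homed on wavelength $\lambda$ iff $n\in\mathcal{M}_\lambda:=\{\lambda+k\Lambda:k=0,\ldots,\eta-1\}$ (so $N\in\mathcal{M}_\Lambda$). Hotspot destination traffic: the sender $S$ is uniform on $\{1,\ldots,N-1\}$, a fanout $l\in\{1,\ldots,N-1\}$ is drawn from a distribution $(\nu_l)$, and the destination set is $\mathcal{F}=\mathcal{F}'\cup\{N\}$ with $\mathcal{F}'$ uniform among $(l-1)$-subsets of $\{1,\ldots,N-1\}\setminus\{S\}$. Let $\mathcal{F}_\Lambda:=\mathcal{F}\cap\mathcal{M}_\Lambda$ and $\mathcal{A}_\Lambda:=\mathcal{F}_\Lambda\cup\{S\}=\{X_1<\dots<X_{k}\}\subset\{1,\ldots,N\}$. The gaps are the clockwise arcs between cyclically consecutive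 active nodes, with lengths $X_1+N-X_{k}$ and $X_i-X_{i-1}$; a largest gap is chosen uniformly at random among ties (the chosen largest gap), and $\mathcal{G}_\Lambda\in\{0,\ldots,N-1\}$ is the node at which it starts in the clockwise sense. *)

theory Defs
  imports "HOL-Probability.Probability"
begin

text \<open>Nodes are labelled 1..N (node N is node 0, the hotspot).  The set of nodes
  homed on wavelength lam, for Lambda wavelengths and eta = N div Lambda.\<close>
definition homed :: "nat \<Rightarrow> nat \<Rightarrow> nat \<Rightarrow> nat set" where
  "homed N Lam lam = {lam + k * Lam | k. k < N div Lam}"

definition gap_len :: "nat \<Rightarrow> nat set \<Rightarrow> nat \<Rightarrow> nat" where
  "gap_len N A x = (if \<exists>y\<in>A. x < y then Min {y\<in>A. x < y} - x else Min A + N - x)"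

definition largest_gap_starts :: "nat \<Rightarrow> nat set \<Rightarrow> nat set" where
  "largest_gap_starts N A =
     (\<lambda>x. x mod N) ` {x\<in>A. \<forall>y\<in>A. gap_len N A y \<le> gap_len N A x}"

text \<open>Hotspot destination traffic: outcome (S, F, G_Lambda).\<close>
definition hotspot_traffic :: "nat \<Rightarrow> nat \<Rightarrow> nat pmf \<Rightarrow> (nat \<times> nat set \<times> nat) pmf" where
  "hotspot_traffic N Lam \<nu> =
     bind_pmf (pmf_of_set {1..N-1}) (\<lambda>S.
     bind_pmf \<nu> (\<lambda>l.
     bind_pmf (pmf_of_set {B. B \<subseteq> {1..N-1} - {S} \<and> card B = l - 1}) (\<lambda>F0.
     bind_pmf (pmf_of_set (largest_gap_starts N (insert S (insert N F0 \<inter> homed N Lam Lam)))) (\<lambda>G.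
     return_pmf (S, insert N F0, G)))))"

end

theory Submission
  imports Defs
begin

text \<open>The probability that the chosen largest gap starts at a node depends only on clockwise
  distances, so it is invariant under rotating the ring by multiples of \<open>\<Lambda>\<close>, which permute
  the nodes homed on \<open>\<Lambda>\<close> (the lattice) and the remaining nodes among themselves.

  If the sender is a lattice node, the active set consists of \<open>ell + 1\<close> lattice nodes and
  rotation symmetry gives probability exactly \<open>1/(ell+1)\<close> for the hotspot.  If the sender \<open>S\<close>
  lies strictly between two consecutive lattice nodes, moving it back to the previous one can
  only increase its chance of starting the largest gap, and moving it forward to the next one can
  only decrease it.  The first comparison is unavailable when the previous lattice node is itself
  active, but such senders can win in at most one lattice interval per configuration.
  Summing over all configurations and rotations, double counting turns these
  comparisons into the two bounds (using \<open>(ell+1) C(\<eta>,ell+1) = (\<eta>-ell) C(\<eta>,ell)\<close>), and both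
  bounds bracket \<open>1/(ell+1)\<close>, so they survive the average over sender and fanout.\<close>

definition cw_dist :: "nat \<Rightarrow> nat \<Rightarrow> nat \<Rightarrow> nat" where
  "cw_dist N x a = (a + N - x) mod N"

lemma cw_dist_eq:
  assumes x: "x \<in> {1..N}" and a: "a \<in> {1..N}"
  shows "cw_dist N x a = (if x \<le> a then a - x else a + N - x)"
proof (cases "x \<le> a")
  case True
  have "a + N - x = (a - x) + N" "a - x < N" using True x a by auto
  then have "(a + N - x) mod N = a - x" by (metis mod_add_self2 mod_less)
  then show ?thesis unfolding cw_dist_def using True by simp
next
  case False
  then have "a + N - x < N" using a x by auto
  then show ?thesis unfolding cw_dist_def using False by simp
qed

lemma cw_dist_bounds:
  assumes "x \<in> {1..N}" "a \<in> {1..N}" "x \<noteq> a"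
  shows "0 < cw_dist N x a \<and> cw_dist N x a < N"
  using assms by (auto simp: cw_dist_eq)

lemma cw_dist_add_swap:
  assumes "x \<in> {1..N}" "a \<in> {1..N}" "x \<noteq> a"
  shows "cw_dist N x a + cw_dist N a x = N"
  using assms by (auto simp: cw_dist_eq)

lemma cw_dist_add:
  assumes "a \<in> {1..N}" "b \<in> {1..N}" "c \<in> {1..N}" "a \<noteq> c" "cw_dist N a b + cw_dist N b c < N"
  shows "cw_dist N a c = cw_dist N a b + cw_dist N b c"
  using assms by (auto simp: cw_dist_eq split: if_splits)

text \<open>The gap starting at \<open>x\<close> measured by clockwise distances only, hence rotation invariant;
  it agrees with \<open>gap_len\<close> on active sets of at least two nodes.\<close>
definition gap :: "nat \<Rightarrow> nat set \<Rightarrow> nat \<Rightarrow> nat" where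
  "gap N W x = Min (cw_dist N x ` (W - {x}))"

definition largest_gaps :: "nat \<Rightarrow> nat set \<Rightarrow> nat set" where
  "largest_gaps N W = {x\<in>W. \<forall>y\<in>W. gap N W y \<le> gap N W x}"

definition choice_prob :: "nat \<Rightarrow> nat set \<Rightarrow> nat \<Rightarrow> real" where
  "choice_prob N W a = (if a \<in> largest_gaps N W then 1 / real (card (largest_gaps N W)) else 0)"

lemma Min_le_Min_dominated:
  fixes A B :: "'a::linorder set"
  assumes "finite A" "finite B" "B \<noteq> {}" "\<forall>b\<in>B. \<exists>a\<in>A. a \<le> b"
  shows "Min A \<le> Min B"
proof -
  obtain a where "a \<in> A" "a \<le> Min B" using assms Min_in[of B] by blast
  then show ?thesis using assms(1) by (meson Min_le order_trans)
qed

lemma gap_insert_mono: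
  assumes "finite T" "t \<in> T" "cw_dist N t x \<le> cw_dist N t y" "t \<noteq> x" "t \<noteq> y"
  shows "gap N (insert x T) t \<le> gap N (insert y T) t"
  unfolding gap_def
proof (rule Min_le_Min_dominated)
  show "\<forall>b\<in>cw_dist N t ` (insert y T - {t}). \<exists>a\<in>cw_dist N t ` (insert x T - {t}). a \<le> b"
    using assms(3-5) by blast
qed (use assms in auto)

lemma largest_gaps_subset: "largest_gaps N W \<subseteq> W"
  unfolding largest_gaps_def by blast

lemma largest_gaps_nonempty:
  assumes "finite W" "W \<noteq> {}"
  shows "largest_gaps N W \<noteq> {}"
proof -
  obtain x where "x \<in> W" "gap N W x = Max (gap N W ` W)"
    using Max_in[of "gap N W ` W"] assms by fastforce
  then have "x \<in> largest_gaps N W" unfolding largest_gaps_def using assms(1) by simp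
  then show ?thesis by blast
qed

text \<open>Moving an isolated active node \<open>y\<close> back to \<open>x\<close> lengthens its own gap by \<open>\<delta>\<close> and
  lengthens no other gap.\<close>
lemma largest_gaps_insert_farther:
  assumes fin: "finite T" and ne: "T \<noteq> {}" and xT: "x \<notin> T" and yT: "y \<notin> T"
    and d: "\<And>t. t \<in> T \<Longrightarrow> cw_dist N x t = \<delta> + cw_dist N y t \<and> cw_dist N t x \<le> cw_dist N t y"
    and dp: "\<delta> > 0"
    and yA: "y \<in> largest_gaps N (insert y T)"
  shows "largest_gaps N (insert x T) = {x}"
proof -
  have gx: "\<delta> + gap N (insert y T) y \<le> gap N (insert x T) x"
  proof -
    have ex: "insert x T - {x} = T" "insert y T - {y} = T" using xT yT by auto
    have "Min (cw_dist N x ` T) \<in> cw_dist N x ` T" using fin ne by (intro Min_in) auto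
    then obtain t0 where t0: "t0 \<in> T" "Min (cw_dist N x ` T) = cw_dist N x t0" by auto
    have "Min (cw_dist N y ` T) \<le> cw_dist N y t0" using fin t0 by auto
    then show ?thesis unfolding gap_def ex using t0 d[of t0] by simp
  qed
  have gt: "gap N (insert x T) t < gap N (insert x T) x" if "t \<in> T" for t
  proof -
    have "gap N (insert x T) t \<le> gap N (insert y T) t"
      using gap_insert_mono[OF fin that, of N x y] d[OF that] that xT yT by auto
    also have "\<dots> \<le> gap N (insert y T) y" using yA that unfolding largest_gaps_def by auto
    finally show ?thesis using gx dp by linarith
  qed
  then have "x \<in> largest_gaps N (insert x T)" "\<forall>t\<in>T. t \<notin> largest_gaps N (insert x T)"
    unfolding largest_gaps_def by fastforce+
  then show ?thesis using largest_gaps_subset[of N "insert x T"] by blast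
qed

definition lattice :: "nat \<Rightarrow> nat \<Rightarrow> nat set" where "lattice N Lam = {x\<in>{1..N}. Lam dvd x}"
definition off_lattice :: "nat \<Rightarrow> nat \<Rightarrow> nat set" where "off_lattice N Lam = {x\<in>{1..N}. \<not> Lam dvd x}"

lemma lattice_cw_dist_le:
  assumes L: "0 < Lam" "Lam dvd N" and p: "p \<in> lattice N Lam" and t: "t \<in> lattice N Lam" and ne: "p \<noteq> t"
  shows "cw_dist N p t + Lam \<le> N"
proof -
  have pr: "p \<in> {1..N}" "t \<in> {1..N}" using p t unfolding lattice_def by auto
  have d: "Lam dvd cw_dist N p t" unfolding cw_dist_def
    using p t L(2) unfolding lattice_def by (intro dvd_mod) auto
  have lt: "cw_dist N p t < N" using cw_dist_bounds[OF pr ne] by blast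
  obtain a where a: "cw_dist N p t = Lam * a" using d by blast
  obtain b where b: "N = Lam * b" using L(2) by blast
  have "a < b" using lt a b L(1) by simp
  then have "Lam * a + Lam \<le> Lam * b"
    by (metis Suc_leI mult_Suc_right mult_le_mono2 add.commute)
  then show ?thesis using a b by simp
qed

lemma cw_dist_off_after_lattice:
  assumes L: "0 < Lam" "Lam dvd N" and p: "p \<in> lattice N Lam" and S: "S \<in> off_lattice N Lam"
    and d: "cw_dist N p S < Lam" and t: "t \<in> lattice N Lam" and ne: "t \<noteq> p"
  shows "cw_dist N t S = cw_dist N t p + cw_dist N p S" "cw_dist N p t = cw_dist N p S + cw_dist N S t"
proof -
  have r: "p \<in> {1..N}" "t \<in> {1..N}" "S \<in> {1..N}" using p t S unfolding lattice_def off_lattice_def by auto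
  have tS: "t \<noteq> S" "p \<noteq> S" using t p S unfolding lattice_def off_lattice_def by auto
  have "cw_dist N t p + Lam \<le> N" using lattice_cw_dist_le[OF L t p ne] .
  then have "cw_dist N t p + cw_dist N p S < N" using d by linarith
  then show e: "cw_dist N t S = cw_dist N t p + cw_dist N p S" using cw_dist_add[OF r(2) r(1) r(3) tS(1)] by blast
  have "cw_dist N p t + cw_dist N t p = N" using cw_dist_add_swap[OF r(1) r(2)] ne by auto
  moreover have "cw_dist N S t + cw_dist N t S = N" using cw_dist_add_swap[OF r(3) r(2)] tS by auto
  ultimately show "cw_dist N p t = cw_dist N p S + cw_dist N S t" using e by linarith
qed

lemma cw_dist_off_before_lattice:
  assumes L: "0 < Lam" "Lam dvd N" and p: "p \<in> lattice N Lam" and S: "S \<in> off_lattice N Lam"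
    and d: "cw_dist N S p < Lam" and t: "t \<in> lattice N Lam" and ne: "t \<noteq> p"
  shows "cw_dist N S t = cw_dist N S p + cw_dist N p t" "cw_dist N t p = cw_dist N t S + cw_dist N S p"
proof -
  have r: "p \<in> {1..N}" "t \<in> {1..N}" "S \<in> {1..N}" using p t S unfolding lattice_def off_lattice_def by auto
  have tS: "t \<noteq> S" "p \<noteq> S" using t p S unfolding lattice_def off_lattice_def by auto
  have "cw_dist N p t + Lam \<le> N" using lattice_cw_dist_le[OF L p t] ne by auto
  then have "cw_dist N S p + cw_dist N p t < N" using d by linarith
  then show e: "cw_dist N S t = cw_dist N S p + cw_dist N p t" using cw_dist_add[OF r(3) r(1) r(2)] tS(1) by auto
  have "cw_dist N p t + cw_dist N t p = N" using cw_dist_add_swap[OF r(1) r(2)] ne by auto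
  moreover have "cw_dist N S t + cw_dist N t S = N" using cw_dist_add_swap[OF r(3) r(2)] tS by auto
  ultimately show "cw_dist N t p = cw_dist N t S + cw_dist N S p" using e by linarith
qed

lemma choice_prob_le_1: "choice_prob N W a \<le> 1"
proof -
  have "1 / real (card (largest_gaps N W)) \<le> 1"
    by (cases "card (largest_gaps N W) = 0") (simp_all add: divide_le_eq_1)
  then show ?thesis unfolding choice_prob_def by simp
qed

lemma choice_prob_nonneg: "0 \<le> choice_prob N W a"
  unfolding choice_prob_def by auto

lemma choice_prob_singleton: "largest_gaps N W = {a} \<Longrightarrow> choice_prob N W a = 1"
  unfolding choice_prob_def by simp

lemma choice_prob_next_lattice_le:
  assumes L: "0 < Lam" "Lam dvd N" and s: "s \<in> lattice N Lam" and S: "S \<in> off_lattice N Lam"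
    and d: "cw_dist N S s < Lam" and T: "T \<subseteq> lattice N Lam" "finite T" "T \<noteq> {}" and sT: "s \<notin> T"
  shows "choice_prob N (insert s T) s \<le> choice_prob N (insert S T) S"
proof (cases "s \<in> largest_gaps N (insert s T)")
  case True
  have ST: "S \<notin> T" using S T unfolding lattice_def off_lattice_def by auto
  have "largest_gaps N (insert S T) = {S}"
  proof (rule largest_gaps_insert_farther[OF T(2,3) ST sT _ _ True])
    fix t assume t: "t \<in> T"
    then have tl: "t \<in> lattice N Lam" "t \<noteq> s" using T sT by auto
    show "cw_dist N S t = cw_dist N S s + cw_dist N s t \<and> cw_dist N t S \<le> cw_dist N t s"
      using cw_dist_off_before_lattice[OF L s S d tl] by simp
  next
    have "S \<noteq> s" using S s unfolding lattice_def off_lattice_def by auto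
    then show "0 < cw_dist N S s" using cw_dist_bounds[of S N s] S s unfolding lattice_def off_lattice_def by auto
  qed
  then show ?thesis using choice_prob_le_1[of N "insert s T" s] choice_prob_singleton by simp
next
  case False
  then show ?thesis unfolding choice_prob_def by simp
qed

lemma choice_prob_le_prev_lattice:
  assumes L: "0 < Lam" "Lam dvd N" and p: "p \<in> lattice N Lam" and S: "S \<in> off_lattice N Lam"
    and d: "cw_dist N p S < Lam" and T: "T \<subseteq> lattice N Lam" "finite T" "T \<noteq> {}" and pT: "p \<notin> T"
  shows "choice_prob N (insert S T) S \<le> choice_prob N (insert p T) p"
proof (cases "S \<in> largest_gaps N (insert S T)")
  case True
  have ST: "S \<notin> T" using S T unfolding lattice_def off_lattice_def by auto
  have "largest_gaps N (insert p T) = {p}"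
  proof (rule largest_gaps_insert_farther[OF T(2,3) pT ST _ _ True])
    fix t assume t: "t \<in> T"
    then have tl: "t \<in> lattice N Lam" "t \<noteq> p" using T pT by auto
    show "cw_dist N p t = cw_dist N p S + cw_dist N S t \<and> cw_dist N t p \<le> cw_dist N t S"
      using cw_dist_off_after_lattice[OF L p S d tl] by simp
  next
    have "S \<noteq> p" using S p unfolding lattice_def off_lattice_def by auto
    then show "0 < cw_dist N p S" using cw_dist_bounds[of p N S] S p unfolding lattice_def off_lattice_def by auto
  qed
  then show ?thesis using choice_prob_le_1[of N "insert S T" S] choice_prob_singleton by simp
next
  case False
  then show ?thesis unfolding choice_prob_def by simp
qed

lemma gap_insert_off_after_lattice_other:
  assumes L: "0 < Lam" "Lam dvd N" and T: "T \<subseteq> lattice N Lam" "finite T"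
    and p: "p \<in> T" and S: "S \<in> off_lattice N Lam" and d: "cw_dist N p S < Lam"
    and t: "t \<in> T" and tp: "t \<noteq> p"
  shows "gap N T t \<le> gap N (insert S T) t"
  unfolding gap_def
proof (rule Min_le_Min_dominated)
  have tl: "t \<in> lattice N Lam" and pl: "p \<in> lattice N Lam" using t p T by auto
  have "cw_dist N t p \<le> cw_dist N t S" using cw_dist_off_after_lattice(1)[OF L pl S d tl tp] by simp
  then show "\<forall>b\<in>cw_dist N t ` (insert S T - {t}). \<exists>a\<in>cw_dist N t ` (T - {t}). a \<le> b"
    using p tp by blast
qed (use T p tp in auto)

lemma gap_insert_off_after_lattice_self:
  assumes L: "0 < Lam" "Lam dvd N" and T: "T \<subseteq> lattice N Lam" "finite T"
    and p: "p \<in> T" and S: "S \<in> off_lattice N Lam" and d: "cw_dist N p S < Lam"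
    and t: "t \<in> T" and tp: "t \<noteq> p"
  shows "gap N (insert S T) S < gap N T p"
proof -
  have ST: "S \<notin> T" and pS: "p \<noteq> S" using S T p unfolding lattice_def off_lattice_def by auto
  have pl: "p \<in> lattice N Lam" using p T by auto
  have "Min (cw_dist N p ` (T - {p})) \<in> cw_dist N p ` (T - {p})" using T t tp by (intro Min_in) auto
  then obtain u where u: "u \<in> T - {p}" "gap N T p = cw_dist N p u" unfolding gap_def by blast
  have "cw_dist N p u = cw_dist N p S + cw_dist N S u"
    using cw_dist_off_after_lattice(2)[OF L pl S d] u T by auto
  moreover have "0 < cw_dist N p S"
    using cw_dist_bounds[OF _ _ pS] pl S unfolding lattice_def off_lattice_def by auto
  moreover have "gap N (insert S T) S \<le> cw_dist N S u"
    unfolding gap_def using T u ST by (intro Min_le) auto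
  ultimately show ?thesis using u by linarith
qed

text \<open>Placing \<open>S\<close> just after \<open>p\<close> shortens the gap of \<open>p\<close> and no other gap, so \<open>S\<close> can only start
  a largest gap if the gap of \<open>p\<close> was the unique largest one before.\<close>
lemma gap_prev_lattice_greatest:
  assumes L: "0 < Lam" "Lam dvd N" and T: "T \<subseteq> lattice N Lam" "finite T"
    and p: "p \<in> T" and S: "S \<in> off_lattice N Lam" and d: "cw_dist N p S < Lam"
    and SA: "S \<in> largest_gaps N (insert S T)" and t: "t \<in> T" and tp: "t \<noteq> p"
  shows "gap N T t < gap N T p"
proof -
  have "gap N T t \<le> gap N (insert S T) t"
    by (rule gap_insert_off_after_lattice_other[OF L T p S d t tp])
  also have "\<dots> \<le> gap N (insert S T) S" using SA t unfolding largest_gaps_def by blast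
  also have "\<dots> < gap N T p" by (rule gap_insert_off_after_lattice_self[OF L T p S d t tp])
  finally show ?thesis .
qed

lemma prev_lattice_of_chosen_unique:
  assumes L: "0 < Lam" "Lam dvd N" and T: "T \<subseteq> lattice N Lam" "finite T"
    and p1: "p1 \<in> T" and S1: "S1 \<in> off_lattice N Lam" and d1: "cw_dist N p1 S1 < Lam"
    and SA1: "S1 \<in> largest_gaps N (insert S1 T)"
    and p2: "p2 \<in> T" and S2: "S2 \<in> off_lattice N Lam" and d2: "cw_dist N p2 S2 < Lam"
    and SA2: "S2 \<in> largest_gaps N (insert S2 T)"
  shows "p1 = p2"
proof (rule ccontr)
  assume ne: "p1 \<noteq> p2"
  have "gap N T p2 < gap N T p1" using gap_prev_lattice_greatest[OF L T p1 S1 d1 SA1 p2] ne by auto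
  moreover have "gap N T p1 < gap N T p2" using gap_prev_lattice_greatest[OF L T p2 S2 d2 SA2 p1] ne by auto
  ultimately show False by linarith
qed

text \<open>The lattice node preceding the off-lattice nodes \<open>j * Lam + r\<close>, \<open>0 < r < Lam\<close>; for
  \<open>j = 0\<close> this is the hotspot \<open>N\<close>, node \<open>0\<close> of the ring.\<close>
definition prev_lattice :: "nat \<Rightarrow> nat \<Rightarrow> nat \<Rightarrow> nat" where
  "prev_lattice N Lam j = (if j = 0 then N else j * Lam)"

lemma inj_on_mult_add: "inj_on (\<lambda>(j, r). j * m + r) (A \<times> {..<(m::nat)})"
proof (rule inj_onI, clarify)
  fix j r j' r' :: nat
  assume r: "r < m" "r' < m" and eq: "j * m + r = j' * m + r'"
  have "(j * m + r) mod m = r" "(j' * m + r') mod m = r'" using r by simp_all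
  moreover have "(j * m + r) div m = j" "(j' * m + r') div m = j'" using r by simp_all
  ultimately show "j = j' \<and> r = r'" using eq by metis
qed

lemma off_lattice_eq_image:
  assumes L: "0 < Lam" "N = e * Lam"
  shows "off_lattice N Lam = (\<lambda>(j,r). j*Lam + r) ` ({..<e} \<times> {1..<Lam})"
    "inj_on (\<lambda>(j,r). j*Lam + r) ({..<e} \<times> {1..<Lam})"
proof -
  show "off_lattice N Lam = (\<lambda>(j,r). j*Lam + r) ` ({..<e} \<times> {1..<Lam})"
  proof (intro equalityI subsetI)
    fix x assume x: "x \<in> off_lattice N Lam"
    then have x1: "1 \<le> x" "x \<le> N" "\<not> Lam dvd x" unfolding off_lattice_def by auto
    then have "x < e * Lam" using L by (cases "x = N") auto
    then have "x div Lam < e" using L by (simp add: div_less_iff_less_mult)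
    moreover have "x mod Lam \<in> {1..<Lam}" using x1 L by (auto simp: dvd_eq_mod_eq_0)
    ultimately show "x \<in> (\<lambda>(j,r). j*Lam + r) ` ({..<e} \<times> {1..<Lam})"
      by (intro image_eqI[where x="(x div Lam, x mod Lam)"]) auto
  next
    fix x assume "x \<in> (\<lambda>(j,r). j*Lam + r) ` ({..<e} \<times> {1..<Lam})"
    then obtain j r where jr: "j < e" "1 \<le> r" "r < Lam" "x = j*Lam + r" by auto
    have "\<not> Lam dvd x" using jr by (simp add: dvd_eq_mod_eq_0)
    moreover have "j * Lam + r < (j+1) * Lam" using jr by simp
    moreover have "(j+1) * Lam \<le> N" unfolding L(2) using jr by (intro mult_le_mono1) simp
    ultimately show "x \<in> off_lattice N Lam" unfolding off_lattice_def using jr by simp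
  qed
  show "inj_on (\<lambda>(j,r). j*Lam + r) ({..<e} \<times> {1..<Lam})"
    by (rule inj_on_subset[OF inj_on_mult_add]) auto
qed

lemma lattice_eq_image_next:
  assumes L: "0 < Lam" "N = e * Lam"
  shows "lattice N Lam = (\<lambda>j. (j+1)*Lam) ` {..<e}" "inj_on (\<lambda>j. (j+1)*Lam) {..<e}"
proof -
  show "inj_on (\<lambda>j. (j+1)*Lam) {..<e}" using L by (intro inj_onI) simp
  show "lattice N Lam = (\<lambda>j. (j+1)*Lam) ` {..<e}"
  proof (intro equalityI subsetI)
    fix x assume x: "x \<in> lattice N Lam"
    then obtain k where k: "x = Lam * k" "1 \<le> x" "x \<le> N" unfolding lattice_def by auto
    have "k \<ge> 1" using k by (cases k) auto
    moreover have "k \<le> e" using k L by simp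
    ultimately show "x \<in> (\<lambda>j. (j+1)*Lam) ` {..<e}"
      using k by (intro image_eqI[where x="k - 1"]) (auto simp: mult.commute)
  next
    fix x assume "x \<in> (\<lambda>j. (j+1)*Lam) ` {..<e}"
    then obtain j where j: "j < e" "x = (j+1)*Lam" by auto
    have "(j+1)*Lam \<le> e*Lam" using j by (intro mult_le_mono1) simp
    then have "x \<le> N" using j L by simp
    moreover have "1 \<le> x" using j L by simp
    ultimately show "x \<in> lattice N Lam" unfolding lattice_def using j by simp
  qed
qed

lemma lattice_eq_image_prev:
  assumes L: "0 < Lam" "N = e * Lam"
  shows "lattice N Lam = prev_lattice N Lam ` {..<e}" "inj_on (prev_lattice N Lam) {..<e}"
proof -
  show "lattice N Lam = prev_lattice N Lam ` {..<e}"
  proof (intro equalityI subsetI)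
    fix x assume x: "x \<in> lattice N Lam"
    then obtain k where k: "x = Lam * k" "1 \<le> x" "x \<le> N" unfolding lattice_def by auto
    have k1: "k \<ge> 1" using k by (cases k) auto
    have ke: "k \<le> e" using k L by simp
    show "x \<in> prev_lattice N Lam ` {..<e}"
    proof (cases "k = e")
      case True
      then show ?thesis using k L k1 by (intro image_eqI[where x=0]) (auto simp: prev_lattice_def mult.commute)
    next
      case False
      then show ?thesis using k L k1 ke by (intro image_eqI[where x=k]) (auto simp: prev_lattice_def mult.commute)
    qed
  next
    fix x assume "x \<in> prev_lattice N Lam ` {..<e}"
    then obtain j where j: "j < e" "x = prev_lattice N Lam j" by auto
    show "x \<in> lattice N Lam"
    proof (cases "j = 0")
      case True
      then show ?thesis using j L unfolding lattice_def prev_lattice_def by auto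
    next
      case False
      have "x \<le> N" using j L False unfolding prev_lattice_def by simp
      moreover have "1 \<le> x" using j L False unfolding prev_lattice_def by simp
      ultimately show ?thesis unfolding lattice_def using j False by (simp add: prev_lattice_def)
    qed
  qed
  show "inj_on (prev_lattice N Lam) {..<e}"
  proof (rule inj_onI)
    fix a b assume a: "a \<in> {..<e}" and b: "b \<in> {..<e}" and eq: "prev_lattice N Lam a = prev_lattice N Lam b"
    have "a * Lam < N" if "a < e" for a using that L by simp
    then show "a = b" using a b eq L unfolding prev_lattice_def by (auto split: if_splits)
  qed
qed

lemma cw_dist_to_next_lattice:
  assumes L: "0 < Lam" "N = e * Lam" and j: "j < e" and r: "1 \<le> r" "r < Lam"
  shows "cw_dist N (j*Lam + r) ((j+1)*Lam) < Lam"
proof -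
  have "(j+1)*Lam \<le> e*Lam" using j by (intro mult_le_mono1) simp
  then have le: "(j+1)*Lam \<le> N" using L by simp
  have "j*Lam + r \<in> {1..N}" using le r by simp
  moreover have "(j+1)*Lam \<in> {1..N}" using le L by simp
  ultimately have "cw_dist N (j*Lam + r) ((j+1)*Lam) = (j+1)*Lam - (j*Lam + r)"
    using r by (simp add: cw_dist_eq)
  then show ?thesis using r by simp
qed

lemma cw_dist_from_prev_lattice:
  assumes L: "0 < Lam" "N = e * Lam" and j: "j < e" and r: "1 \<le> r" "r < Lam"
  shows "cw_dist N (prev_lattice N Lam j) (j*Lam + r) < Lam"
proof -
  have "(j+1)*Lam \<le> e*Lam" using j by (intro mult_le_mono1) simp
  then have le: "(j+1)*Lam \<le> N" using L by simp
  have s: "j*Lam + r \<in> {1..N}" using le r by simp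
  show ?thesis
  proof (cases "j = 0")
    case True
    have "N \<in> {1..N}" using le L j by simp
    then have "cw_dist N N r = r + N - N" using s True r le by (simp add: cw_dist_eq)
    then show ?thesis using True r by (simp add: prev_lattice_def)
  next
    case False
    have "j*Lam \<in> {1..N}" using le L False j by simp
    then have "cw_dist N (j*Lam) (j*Lam + r) = r" using s by (simp add: cw_dist_eq)
    then show ?thesis using False r by (simp add: prev_lattice_def)
  qed
qed

lemma off_lattice_memI: "0 < Lam \<Longrightarrow> N = e * Lam \<Longrightarrow> j < e \<Longrightarrow> 1 \<le> r \<Longrightarrow> r < Lam \<Longrightarrow> j*Lam + r \<in> off_lattice N Lam"
  using off_lattice_eq_image(1)[of Lam N e] by auto

lemma next_lattice_mem: "0 < Lam \<Longrightarrow> N = e * Lam \<Longrightarrow> j < e \<Longrightarrow> (j+1)*Lam \<in> lattice N Lam"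
  using lattice_eq_image_next(1)[of Lam N e] by auto

lemma prev_lattice_mem: "0 < Lam \<Longrightarrow> N = e * Lam \<Longrightarrow> j < e \<Longrightarrow> prev_lattice N Lam j \<in> lattice N Lam"
  using lattice_eq_image_prev(1)[of Lam N e] by auto

lemma sum_off_lattice:
  assumes L: "0 < Lam" "N = e * Lam"
  shows "(\<Sum>S\<in>off_lattice N Lam. f S) = (\<Sum>j<e. \<Sum>r\<in>{1..<Lam}. f (j*Lam + r))"
proof -
  have "(\<Sum>S\<in>off_lattice N Lam. f S) = (\<Sum>x\<in>{..<e} \<times> {1..<Lam}. f ((\<lambda>(j,r). j*Lam + r) x))"
    unfolding off_lattice_eq_image(1)[OF L] using sum.reindex[OF off_lattice_eq_image(2)[OF L], of f] by (simp add: comp_def)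
  also have "\<dots> = (\<Sum>(j,r)\<in>{..<e} \<times> {1..<Lam}. f (j*Lam + r))"
    by (rule sum.cong) auto
  also have "\<dots> = (\<Sum>j<e. \<Sum>r\<in>{1..<Lam}. f (j*Lam + r))"
    by (rule sum.cartesian_product[symmetric])
  finally show ?thesis .
qed

lemma sum_lattice_next:
  assumes L: "0 < Lam" "N = e * Lam"
  shows "(\<Sum>s\<in>lattice N Lam. f s) = (\<Sum>j<e. f ((j+1)*Lam))"
  unfolding lattice_eq_image_next(1)[OF L] using lattice_eq_image_next(2)[OF L] by (simp add: sum.reindex)

lemma sum_lattice_prev:
  assumes L: "0 < Lam" "N = e * Lam"
  shows "(\<Sum>s\<in>lattice N Lam. f s) = (\<Sum>j<e. f (prev_lattice N Lam j))"
  unfolding lattice_eq_image_prev(1)[OF L] using lattice_eq_image_prev(2)[OF L] by (simp add: sum.reindex)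

lemma finite_lattice: "finite (lattice N Lam)" unfolding lattice_def by simp
lemma finite_off_lattice: "finite (off_lattice N Lam)" unfolding off_lattice_def by simp

lemma sum_lattice_Diff:
  "(\<Sum>s\<in>lattice N Lam - T. g s) = (\<Sum>s\<in>lattice N Lam. if s \<notin> T then g s else 0)"
proof -
  have "lattice N Lam - T = {s\<in>lattice N Lam. s \<notin> T}" by blast
  then show ?thesis using sum.inter_filter[OF finite_lattice, of g N Lam "\<lambda>s. s \<notin> T"] by simp
qed

lemma sum_choice_prob_off_lower:
  assumes L: "0 < Lam" "N = e * Lam" "Lam dvd N"
    and T: "T \<subseteq> lattice N Lam" "finite T" "T \<noteq> {}"
  shows "real (Lam - 1) * (\<Sum>s\<in>lattice N Lam - T. choice_prob N (insert s T) s)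
         \<le> (\<Sum>S\<in>off_lattice N Lam. choice_prob N (insert S T) S)"
proof -
  define A where "A j = (if (j+1)*Lam \<notin> T then choice_prob N (insert ((j+1)*Lam) T) ((j+1)*Lam) else 0)" for j
  have "(\<Sum>s\<in>lattice N Lam - T. choice_prob N (insert s T) s) = (\<Sum>j<e. A j)"
    unfolding sum_lattice_Diff sum_lattice_next[OF L(1,2)] A_def by (rule refl)
  then have "real (Lam - 1) * (\<Sum>s\<in>lattice N Lam - T. choice_prob N (insert s T) s) = (\<Sum>j<e. \<Sum>r\<in>{1..<Lam}. A j)"
    by (simp add: sum_distrib_left)
  also have "\<dots> \<le> (\<Sum>j<e. \<Sum>r\<in>{1..<Lam}. choice_prob N (insert (j*Lam + r) T) (j*Lam + r))"
  proof (intro sum_mono)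
    fix j r assume j: "j \<in> {..<e}" and r: "r \<in> {1..<Lam}"
    show "A j \<le> choice_prob N (insert (j*Lam + r) T) (j*Lam + r)"
    proof (cases "(j+1)*Lam \<in> T")
      case True
      then show ?thesis unfolding A_def using choice_prob_nonneg by simp
    next
      case False
      have "choice_prob N (insert ((j+1)*Lam) T) ((j+1)*Lam) \<le> choice_prob N (insert (j*Lam + r) T) (j*Lam + r)"
        using choice_prob_next_lattice_le[OF L(1,3) next_lattice_mem[OF L(1,2)] off_lattice_memI[OF L(1,2)] cw_dist_to_next_lattice[OF L(1,2)] T False] j r
        by simp
      then show ?thesis unfolding A_def using False by simp
    qed
  qed
  also have "\<dots> = (\<Sum>S\<in>off_lattice N Lam. choice_prob N (insert S T) S)"
    by (rule sum_off_lattice[OF L(1,2), symmetric])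
  finally show ?thesis .
qed

lemma choice_prob_nonzero_imp_largest: "choice_prob N W a \<noteq> 0 \<Longrightarrow> a \<in> largest_gaps N W"
  unfolding choice_prob_def by (cases "a \<in> largest_gaps N W") simp_all

lemma sum_le_at_most_one_nonzero:
  fixes f :: "'a \<Rightarrow> real"
  assumes "finite I" "0 \<le> c" "\<And>i. i \<in> I \<Longrightarrow> f i \<le> c"
    and "\<And>i j. i \<in> I \<Longrightarrow> j \<in> I \<Longrightarrow> f i \<noteq> 0 \<Longrightarrow> f j \<noteq> 0 \<Longrightarrow> i = j"
  shows "sum f I \<le> c"
proof (cases "\<exists>i\<in>I. f i \<noteq> 0")
  case True
  then obtain i where i: "i \<in> I" "f i \<noteq> 0" by blast
  have "sum f I = f i + sum f (I - {i})" using assms(1) i(1) by (rule sum.remove)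
  also have "sum f (I - {i}) = 0" using assms(4) i by (intro sum.neutral) blast
  finally show ?thesis using assms(3) i(1) by simp
next
  case False
  then have "sum f I = 0" by (intro sum.neutral) blast
  then show ?thesis using assms(2) by simp
qed

text \<open>The exceptional senders of the upper bound: those whose preceding lattice node is active.
  By \<open>prev_lattice_of_chosen_unique\<close> they can win in at most one lattice interval.\<close>
lemma sum_choice_prob_off_occupied_prev_le:
  assumes L: "0 < Lam" "N = e * Lam" "Lam dvd N"
    and T: "T \<subseteq> lattice N Lam" "finite T"
  shows "(\<Sum>j<e. \<Sum>r\<in>{1..<Lam}. if prev_lattice N Lam j \<in> T then choice_prob N (insert (j*Lam + r) T) (j*Lam + r) else 0)
          \<le> real (Lam - 1)"
proof -
  define h where "h j = (\<Sum>r\<in>{1..<Lam}.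
      if prev_lattice N Lam j \<in> T then choice_prob N (insert (j*Lam + r) T) (j*Lam + r) else 0)" for j
  have chosen: "\<exists>r\<in>{1..<Lam}. prev_lattice N Lam j \<in> T \<and> j*Lam + r \<in> largest_gaps N (insert (j*Lam + r) T)"
    if hj: "h j \<noteq> 0" for j
  proof -
    obtain r where "r \<in> {1..<Lam}"
        "(if prev_lattice N Lam j \<in> T then choice_prob N (insert (j*Lam + r) T) (j*Lam + r) else 0) \<noteq> 0"
      using hj unfolding h_def by (rule sum.not_neutral_contains_not_neutral)
    then have "prev_lattice N Lam j \<in> T" "j*Lam + r \<in> largest_gaps N (insert (j*Lam + r) T)"
      by (auto split: if_splits dest: choice_prob_nonzero_imp_largest)
    then show ?thesis using \<open>r \<in> {1..<Lam}\<close> by blast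
  qed
  have "(\<Sum>j<e. h j) \<le> real (Lam - 1)"
  proof (rule sum_le_at_most_one_nonzero)
    fix j
    have "h j \<le> (\<Sum>r\<in>{1..<Lam}. (1::real))" unfolding h_def by (intro sum_mono) (simp add: choice_prob_le_1)
    then show "h j \<le> real (Lam - 1)" by simp
  next
    fix i j assume ij: "i \<in> {..<e}" "j \<in> {..<e}" "h i \<noteq> 0" "h j \<noteq> 0"
    then have "i < e" "j < e" by auto
    moreover obtain r where "r \<in> {1..<Lam}" "prev_lattice N Lam i \<in> T"
        "i*Lam + r \<in> largest_gaps N (insert (i*Lam + r) T)"
      using chosen[OF ij(3)] by blast
    moreover obtain r' where "r' \<in> {1..<Lam}" "prev_lattice N Lam j \<in> T"
        "j*Lam + r' \<in> largest_gaps N (insert (j*Lam + r') T)"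
      using chosen[OF ij(4)] by blast
    ultimately have "prev_lattice N Lam i = prev_lattice N Lam j"
      using prev_lattice_of_chosen_unique[OF L(1,3) T _ off_lattice_memI[OF L(1,2)] cw_dist_from_prev_lattice[OF L(1,2)]
          _ _ off_lattice_memI[OF L(1,2)] cw_dist_from_prev_lattice[OF L(1,2)]]
      by (metis atLeastLessThan_iff)
    then show "i = j" using lattice_eq_image_prev(2)[OF L(1,2)] ij by (simp add: inj_on_def)
  qed simp_all
  then show ?thesis unfolding h_def .
qed

lemma sum_choice_prob_off_upper:
  assumes L: "0 < Lam" "N = e * Lam" "Lam dvd N"
    and T: "T \<subseteq> lattice N Lam" "finite T" "T \<noteq> {}"
  shows "(\<Sum>S\<in>off_lattice N Lam. choice_prob N (insert S T) S)
         \<le> real (Lam - 1) * (\<Sum>s\<in>lattice N Lam - T. choice_prob N (insert s T) s) + real (Lam - 1)"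
proof -
  define A where "A j = (if prev_lattice N Lam j \<notin> T then choice_prob N (insert (prev_lattice N Lam j) T) (prev_lattice N Lam j) else 0)" for j
  define B where "B j r = (if prev_lattice N Lam j \<in> T then choice_prob N (insert (j*Lam + r) T) (j*Lam + r) else 0)" for j r
  have "(\<Sum>S\<in>off_lattice N Lam. choice_prob N (insert S T) S)
      = (\<Sum>j<e. \<Sum>r\<in>{1..<Lam}. choice_prob N (insert (j*Lam + r) T) (j*Lam + r))"
    by (rule sum_off_lattice[OF L(1,2)])
  also have "\<dots> \<le> (\<Sum>j<e. \<Sum>r\<in>{1..<Lam}. A j + B j r)"
  proof (intro sum_mono)
    fix j r assume j: "j \<in> {..<e}" and r: "r \<in> {1..<Lam}"
    show "choice_prob N (insert (j*Lam + r) T) (j*Lam + r) \<le> A j + B j r"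
    proof (cases "prev_lattice N Lam j \<in> T")
      case True
      then show ?thesis unfolding A_def B_def by simp
    next
      case False
      have "choice_prob N (insert (j*Lam + r) T) (j*Lam + r) \<le> choice_prob N (insert (prev_lattice N Lam j) T) (prev_lattice N Lam j)"
        using choice_prob_le_prev_lattice[OF L(1,3) prev_lattice_mem[OF L(1,2)] off_lattice_memI[OF L(1,2)] cw_dist_from_prev_lattice[OF L(1,2)] T False] j r
        by simp
      then show ?thesis unfolding A_def B_def using False by simp
    qed
  qed
  also have "\<dots> = (\<Sum>j<e. \<Sum>r\<in>{1..<Lam}. A j) + (\<Sum>j<e. \<Sum>r\<in>{1..<Lam}. B j r)"
    by (simp add: sum.distrib)
  also have "(\<Sum>j<e. \<Sum>r\<in>{1..<Lam}. A j) = real (Lam - 1) * (\<Sum>j<e. A j)"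
    by (simp add: sum_distrib_left)
  also have "(\<Sum>j<e. A j) = (\<Sum>s\<in>lattice N Lam - T. choice_prob N (insert s T) s)"
    unfolding sum_lattice_Diff sum_lattice_prev[OF L(1,2)] A_def by (rule refl)
  also have "(\<Sum>j<e. \<Sum>r\<in>{1..<Lam}. B j r) \<le> real (Lam - 1)"
    unfolding B_def by (rule sum_choice_prob_off_occupied_prev_le[OF L T(1,2)])
  finally show ?thesis by simp
qed

definition rot :: "nat \<Rightarrow> nat \<Rightarrow> nat \<Rightarrow> nat" where "rot N k x = (x + k - 1) mod N + 1"

lemma rot_range: "0 < N \<Longrightarrow> rot N k x \<in> {1..N}"
  unfolding rot_def by (simp add: Suc_leI)

lemma rot_rot: "0 < N \<Longrightarrow> x \<in> {1..N} \<Longrightarrow> rot N j (rot N k x) = rot N (j + k) x"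
proof -
  assume N: "0 < N" and x: "x \<in> {1..N}"
  have "rot N j (rot N k x) = ((x + k - 1) mod N + j) mod N + 1" unfolding rot_def by simp
  also have "\<dots> = (x + k - 1 + j) mod N + 1" by (simp add: mod_add_left_eq)
  also have "x + k - 1 + j = x + (j + k) - 1" using x by simp
  finally show ?thesis unfolding rot_def by simp
qed

lemma rot_N: "x \<in> {1..N} \<Longrightarrow> rot N N x = x"
proof -
  assume x: "x \<in> {1..N}"
  have e: "x + N - 1 = (x - 1) + N" using x by simp
  have "x - 1 < x" using x by simp
  then have l: "x - 1 < N" using x by simp
  have "(x + N - 1) mod N = x - 1" unfolding e using l by (metis mod_add_self2 mod_less)
  then show ?thesis unfolding rot_def using x by simp
qed

lemma rot_inverse: "0 < N \<Longrightarrow> t \<le> N \<Longrightarrow> x \<in> {1..N} \<Longrightarrow> rot N (N - t) (rot N t x) = x"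
  by (simp add: rot_rot rot_N)

lemma rot_inverse': "0 < N \<Longrightarrow> t \<le> N \<Longrightarrow> x \<in> {1..N} \<Longrightarrow> rot N t (rot N (N - t) x) = x"
proof -
  assume a: "0 < N" "t \<le> N" "x \<in> {1..N}"
  then have "rot N t (rot N (N - t) x) = rot N (t + (N - t)) x" by (simp add: rot_rot)
  also have "t + (N - t) = N" using a by simp
  finally show ?thesis using rot_N[OF a(3)] by simp
qed

lemma rot_hotspot: "t \<in> {1..N} \<Longrightarrow> rot N t N = t"
proof -
  assume t: "t \<in> {1..N}"
  have e: "N + t - 1 = (t - 1) + N" using t by simp
  have "t - 1 < t" using t by simp
  then have l: "t - 1 < N" using t by simp
  have "(N + t - 1) mod N = t - 1" unfolding e using l by (metis mod_add_self2 mod_less)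
  then show ?thesis unfolding rot_def using t by simp
qed

lemma rot_add_div_eq: "x \<in> {1..N} \<Longrightarrow> rot N k x + ((x + k - 1) div N) * N = x + k"
proof -
  assume x: "x \<in> {1..N}"
  have "(x + k - 1) div N * N + (x + k - 1) mod N = x + k - 1" by (rule div_mult_mod_eq)
  then show ?thesis unfolding rot_def using x by simp
qed

lemma dvd_rot_iff: assumes "Lam dvd N" "Lam dvd k" "0 < N" "x \<in> {1..N}"
  shows "Lam dvd rot N k x \<longleftrightarrow> Lam dvd x"
proof -
  have e: "rot N k x + ((x + k - 1) div N) * N = x + k" using rot_add_div_eq[OF assms(4)] .
  have d: "Lam dvd ((x + k - 1) div N) * N" using assms(1) by simp
  show ?thesis
  proof
    assume "Lam dvd rot N k x"
    then have "Lam dvd x + k" using e d by (metis dvd_add)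
    then show "Lam dvd x" using assms(2) by (simp add: dvd_add_left_iff)
  next
    assume "Lam dvd x"
    then have "Lam dvd x + k" using assms(2) by simp
    then show "Lam dvd rot N k x" using e d by (metis dvd_add_left_iff)
  qed
qed

lemma cw_dist_int: "x \<in> {1..N} \<Longrightarrow> a \<in> {1..N} \<Longrightarrow> int (cw_dist N x a) = (int a - int x) mod int N"
proof -
  assume x: "x \<in> {1..N}" and a: "a \<in> {1..N}"
  have "int (cw_dist N x a) = int (a + N - x) mod int N" unfolding cw_dist_def by (simp add: of_nat_mod)
  also have "int (a + N - x) = (int a - int x) + int N" using x by simp
  finally show ?thesis by simp
qed

lemma rot_int: "x \<in> {1..N} \<Longrightarrow> int (rot N k x) = (int x + int k - 1) mod int N + 1"
proof -
  assume x: "x \<in> {1..N}"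
  have "int (rot N k x) = int ((x + k - 1) mod N) + 1" unfolding rot_def by simp
  also have "int ((x + k - 1) mod N) = int (x + k - 1) mod int N" by (simp add: of_nat_mod)
  also have "int (x + k - 1) = int x + int k - 1" using x by simp
  finally show ?thesis .
qed

lemma cw_dist_rot: assumes N: "0 < N" and x: "x \<in> {1..N}" and a: "a \<in> {1..N}"
  shows "cw_dist N (rot N k x) (rot N k a) = cw_dist N x a"
proof -
  have "int (cw_dist N (rot N k x) (rot N k a)) = (int (rot N k a) - int (rot N k x)) mod int N"
    using cw_dist_int[OF rot_range[OF N] rot_range[OF N]] by simp
  also have "\<dots> = ((int a + int k - 1) mod int N - (int x + int k - 1) mod int N) mod int N"
    using rot_int[OF x] rot_int[OF a] by simp
  also have "\<dots> = ((int a + int k - 1) - (int x + int k - 1)) mod int N" by (rule mod_diff_eq)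
  also have "\<dots> = (int a - int x) mod int N" by simp
  also have "\<dots> = int (cw_dist N x a)" using cw_dist_int[OF x a] by simp
  finally show ?thesis by simp
qed

lemma inj_on_rot: "0 < N \<Longrightarrow> k \<le> N \<Longrightarrow> inj_on (rot N k) {1..N}"
  by (rule inj_on_inverseI[where g="rot N (N - k)"]) (simp add: rot_inverse)

lemma gap_rot: assumes N: "0 < N" "k \<le> N" and W: "W \<subseteq> {1..N}" and x: "x \<in> W"
  shows "gap N (rot N k ` W) (rot N k x) = gap N W x"
proof -
  have inj: "inj_on (rot N k) {1..N}" by (rule inj_on_rot[OF N])
  have "rot N k ` (W - {x}) = rot N k ` W - rot N k ` {x}"
    by (rule inj_on_image_set_diff[OF inj]) (use W x in auto)
  then have "rot N k ` W - {rot N k x} = rot N k ` (W - {x})" by simp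
  then have "cw_dist N (rot N k x) ` (rot N k ` W - {rot N k x}) = (\<lambda>a. cw_dist N (rot N k x) (rot N k a)) ` (W - {x})"
    by (simp add: image_image)
  also have "\<dots> = cw_dist N x ` (W - {x})"
  proof (rule image_cong[OF refl])
    fix a assume "a \<in> W - {x}"
    then have "a \<in> {1..N}" "x \<in> {1..N}" using W x by auto
    then show "cw_dist N (rot N k x) (rot N k a) = cw_dist N x a" using cw_dist_rot[OF N(1)] by simp
  qed
  finally show ?thesis unfolding gap_def by simp
qed

lemma largest_gaps_rot: assumes N: "0 < N" "k \<le> N" and W: "W \<subseteq> {1..N}"
  shows "largest_gaps N (rot N k ` W) = rot N k ` largest_gaps N W"
proof (intro equalityI subsetI)
  fix y assume y: "y \<in> largest_gaps N (rot N k ` W)"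
  then obtain x where x: "x \<in> W" "y = rot N k x" unfolding largest_gaps_def by blast
  have "gap N W z \<le> gap N W x" if z: "z \<in> W" for z
  proof -
    from y have "\<forall>u\<in>rot N k ` W. gap N (rot N k ` W) u \<le> gap N (rot N k ` W) y" unfolding largest_gaps_def by blast
    then have "gap N (rot N k ` W) (rot N k z) \<le> gap N (rot N k ` W) y" using z by blast
    then have "gap N (rot N k ` W) (rot N k z) \<le> gap N (rot N k ` W) (rot N k x)" using x(2) by simp
    then show ?thesis using gap_rot[OF N W] x z by simp
  qed
  then have "x \<in> largest_gaps N W" unfolding largest_gaps_def using x by blast
  then show "y \<in> rot N k ` largest_gaps N W" using x by blast
next
  fix y assume "y \<in> rot N k ` largest_gaps N W"
  then obtain x where x: "x \<in> largest_gaps N W" "y = rot N k x" by blast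
  have xW: "x \<in> W" using x largest_gaps_subset by blast
  have "gap N (rot N k ` W) z \<le> gap N (rot N k ` W) y" if z: "z \<in> rot N k ` W" for z
  proof -
    obtain u where u: "u \<in> W" "z = rot N k u" using z by blast
    have "gap N W u \<le> gap N W x" using x u unfolding largest_gaps_def by blast
    then show ?thesis using gap_rot[OF N W] u xW x by simp
  qed
  then show "y \<in> largest_gaps N (rot N k ` W)" unfolding largest_gaps_def using x xW by blast
qed

lemma choice_prob_rot: assumes N: "0 < N" "k \<le> N" and W: "W \<subseteq> {1..N}" and a: "a \<in> {1..N}"
  shows "choice_prob N (rot N k ` W) (rot N k a) = choice_prob N W a"
proof -
  have inj: "inj_on (rot N k) {1..N}" by (rule inj_on_rot[OF N])
  have sub: "largest_gaps N W \<subseteq> {1..N}" using largest_gaps_subset W by blast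
  have c: "card (rot N k ` largest_gaps N W) = card (largest_gaps N W)" using inj sub by (meson card_image inj_on_subset)
  have m: "rot N k a \<in> rot N k ` largest_gaps N W \<longleftrightarrow> a \<in> largest_gaps N W" by (rule inj_on_image_mem_iff[OF inj a sub])
  show ?thesis unfolding choice_prob_def largest_gaps_rot[OF N W] c m by (rule refl)
qed

definition lattice_subsets_at :: "nat \<Rightarrow> nat \<Rightarrow> nat \<Rightarrow> nat \<Rightarrow> nat set set" where
  "lattice_subsets_at N Lam m a = {W. W \<subseteq> lattice N Lam \<and> card W = m \<and> a \<in> W}"

lemma lattice_subset: "lattice N Lam \<subseteq> {1..N}" unfolding lattice_def by blast
lemma off_lattice_subset: "off_lattice N Lam \<subseteq> {1..N}" unfolding off_lattice_def by blast

lemma rot_lattice_mem: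
  assumes L: "0 < Lam" "Lam dvd N" "0 < N" and k: "Lam dvd k"
  shows "x \<in> lattice N Lam \<Longrightarrow> rot N k x \<in> lattice N Lam" "x \<in> off_lattice N Lam \<Longrightarrow> rot N k x \<in> off_lattice N Lam"
proof -
  assume x: "x \<in> lattice N Lam"
  then have "x \<in> {1..N}" "Lam dvd x" unfolding lattice_def by auto
  then show "rot N k x \<in> lattice N Lam" using dvd_rot_iff[OF L(2) k L(3)] rot_range[OF L(3)] unfolding lattice_def by auto
next
  assume x: "x \<in> off_lattice N Lam"
  then have "x \<in> {1..N}" "\<not> Lam dvd x" unfolding off_lattice_def by auto
  then show "rot N k x \<in> off_lattice N Lam" using dvd_rot_iff[OF L(2) k L(3)] rot_range[OF L(3)] unfolding off_lattice_def by auto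
qed

lemma lattice_rot_facts:
  assumes L: "0 < Lam" "Lam dvd N" "0 < N" and t: "t \<in> lattice N Lam"
  shows "Lam dvd t" "Lam dvd (N - t)" "t \<le> N" "N - t \<le> N" "t \<in> {1..N}"
  using t L unfolding lattice_def by (auto simp: dvd_diff_nat)

lemma bij_rot_lattice:
  assumes L: "0 < Lam" "Lam dvd N" "0 < N" and t: "t \<in> lattice N Lam"
  shows "bij_betw (rot N t) (lattice N Lam) (lattice N Lam)"
    "bij_betw (rot N t) (off_lattice N Lam) (off_lattice N Lam)"
proof -
  note tf = lattice_rot_facts[OF L t]
  have inverse: "rot N (N - t) (rot N t a) = a" "rot N t (rot N (N - t) a) = a" if "a \<in> {1..N}" for a
    using rot_inverse[OF L(3) tf(3) that] rot_inverse'[OF L(3) tf(3) that] .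
  show "bij_betw (rot N t) (lattice N Lam) (lattice N Lam)"
  proof (rule bij_betw_byWitness[where f'="rot N (N - t)"])
    show "rot N t ` lattice N Lam \<subseteq> lattice N Lam" "rot N (N - t) ` lattice N Lam \<subseteq> lattice N Lam"
      using rot_lattice_mem(1)[OF L tf(1)] rot_lattice_mem(1)[OF L tf(2)] by blast+
  qed (use inverse lattice_subset in blast)+
  show "bij_betw (rot N t) (off_lattice N Lam) (off_lattice N Lam)"
  proof (rule bij_betw_byWitness[where f'="rot N (N - t)"])
    show "rot N t ` off_lattice N Lam \<subseteq> off_lattice N Lam" "rot N (N - t) ` off_lattice N Lam \<subseteq> off_lattice N Lam"
      using rot_lattice_mem(2)[OF L tf(1)] rot_lattice_mem(2)[OF L tf(2)] by blast+
  qed (use inverse off_lattice_subset in blast)+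
qed

lemma bij_betw_image_subsets_containing:
  assumes "bij_betw f A B" "a \<in> A"
  shows "bij_betw ((`) f) {W. W \<subseteq> A \<and> card W = m \<and> a \<in> W} {V. V \<subseteq> B \<and> card V = m \<and> f a \<in> V}"
proof -
  have inj: "inj_on f A" using assms(1) by (rule bij_betw_imp_inj_on)
  have bij: "bij_betw ((`) f) {W \<in> Pow A. card W = m \<and> a \<in> W} {V \<in> Pow B. card V = m \<and> f a \<in> V}"
  proof (rule bij_betw_Collect[OF bij_betw_Pow[OF assms(1)]])
    fix W assume "W \<in> Pow A"
    then show "(card (f ` W) = m \<and> f a \<in> f ` W) \<longleftrightarrow> (card W = m \<and> a \<in> W)"
      using inj assms(2) by (simp add: card_image inj_on_subset inj_on_image_mem_iff)
  qed
  have eq: "{W. W \<subseteq> C \<and> card W = m \<and> c \<in> W} = {W \<in> Pow C. card W = m \<and> c \<in> W}" for C c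
    by blast
  show ?thesis unfolding eq by (rule bij)
qed

lemma bij_rot_lattice_subsets_at:
  assumes L: "0 < Lam" "Lam dvd N" "0 < N" and t: "t \<in> lattice N Lam"
  shows "bij_betw ((`) (rot N t)) (lattice_subsets_at N Lam m N) (lattice_subsets_at N Lam m t)"
proof -
  have NL: "N \<in> lattice N Lam" using L unfolding lattice_def by auto
  have "bij_betw ((`) (rot N t)) (lattice_subsets_at N Lam m N)
      {V. V \<subseteq> lattice N Lam \<and> card V = m \<and> rot N t N \<in> V}"
    unfolding lattice_subsets_at_def by (rule bij_betw_image_subsets_containing[OF bij_rot_lattice(1)[OF L t] NL])
  then show ?thesis unfolding lattice_subsets_at_def rot_hotspot[OF lattice_rot_facts(5)[OF L t]] .
qed

lemma sum_choice_prob_lattice_subsets_at: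
  assumes L: "0 < Lam" "Lam dvd N" "0 < N" and t: "t \<in> lattice N Lam"
  shows "(\<Sum>W\<in>lattice_subsets_at N Lam m t. choice_prob N W t) = (\<Sum>W\<in>lattice_subsets_at N Lam m N. choice_prob N W N)"
proof -
  note tf = lattice_rot_facts[OF L t]
  have "(\<Sum>W\<in>lattice_subsets_at N Lam m t. choice_prob N W t) = (\<Sum>W\<in>lattice_subsets_at N Lam m N. choice_prob N (rot N t ` W) t)"
    using sum.reindex_bij_betw[OF bij_rot_lattice_subsets_at[OF L t], of "\<lambda>W. choice_prob N W t"] by simp
  also have "\<dots> = (\<Sum>W\<in>lattice_subsets_at N Lam m N. choice_prob N W N)"
  proof (rule sum.cong[OF refl])
    fix W assume "W \<in> lattice_subsets_at N Lam m N"
    then have W: "W \<subseteq> {1..N}" unfolding lattice_subsets_at_def using lattice_subset by blast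
    have "choice_prob N (rot N t ` W) (rot N t N) = choice_prob N W N" using choice_prob_rot[OF L(3) tf(3) W] L(3) by simp
    then show "choice_prob N (rot N t ` W) t = choice_prob N W N" using rot_hotspot[OF tf(5)] by simp
  qed
  finally show ?thesis .
qed

lemma sum_choice_prob_off_lattice_subsets_at:
  assumes L: "0 < Lam" "Lam dvd N" "0 < N" and t: "t \<in> lattice N Lam"
  shows "(\<Sum>S\<in>off_lattice N Lam. \<Sum>T\<in>lattice_subsets_at N Lam m t. choice_prob N (insert S T) t)
       = (\<Sum>S\<in>off_lattice N Lam. \<Sum>T\<in>lattice_subsets_at N Lam m N. choice_prob N (insert S T) N)"
proof -
  note tf = lattice_rot_facts[OF L t]
  have "(\<Sum>S\<in>off_lattice N Lam. \<Sum>T\<in>lattice_subsets_at N Lam m t. choice_prob N (insert S T) t)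
      = (\<Sum>S\<in>off_lattice N Lam. \<Sum>T\<in>lattice_subsets_at N Lam m t. choice_prob N (insert (rot N t S) T) t)"
    using sum.reindex_bij_betw[OF bij_rot_lattice(2)[OF L t], of "\<lambda>S. \<Sum>T\<in>lattice_subsets_at N Lam m t. choice_prob N (insert S T) t"] by simp
  also have "\<dots> = (\<Sum>S\<in>off_lattice N Lam. \<Sum>T\<in>lattice_subsets_at N Lam m N. choice_prob N (insert (rot N t S) (rot N t ` T)) t)"
  proof (rule sum.cong[OF refl])
    fix S assume "S \<in> off_lattice N Lam"
    show "(\<Sum>T\<in>lattice_subsets_at N Lam m t. choice_prob N (insert (rot N t S) T) t)
        = (\<Sum>T\<in>lattice_subsets_at N Lam m N. choice_prob N (insert (rot N t S) (rot N t ` T)) t)"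
      using sum.reindex_bij_betw[OF bij_rot_lattice_subsets_at[OF L t], of "\<lambda>T. choice_prob N (insert (rot N t S) T) t"] by simp
  qed
  also have "\<dots> = (\<Sum>S\<in>off_lattice N Lam. \<Sum>T\<in>lattice_subsets_at N Lam m N. choice_prob N (insert S T) N)"
  proof (intro sum.cong[OF refl])
    fix S T assume S: "S \<in> off_lattice N Lam" and T: "T \<in> lattice_subsets_at N Lam m N"
    have W: "insert S T \<subseteq> {1..N}" using S T off_lattice_subset lattice_subset unfolding lattice_subsets_at_def by blast
    have "choice_prob N (rot N t ` insert S T) (rot N t N) = choice_prob N (insert S T) N" using choice_prob_rot[OF L(3) tf(3) W] L(3) by simp
    then show "choice_prob N (insert (rot N t S) (rot N t ` T)) t = choice_prob N (insert S T) N" using rot_hotspot[OF tf(5)] by simp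
  qed
  finally show ?thesis .
qed

lemma sum_choice_prob: assumes "finite W" "W \<noteq> {}" shows "(\<Sum>a\<in>W. choice_prob N W a) = 1"
proof -
  have ne: "largest_gaps N W \<noteq> {}" using largest_gaps_nonempty[OF assms] .
  have fin: "finite (largest_gaps N W)" using largest_gaps_subset assms(1) by (rule finite_subset)
  have c: "card (largest_gaps N W) \<noteq> 0" using ne fin by simp
  have "(\<Sum>a\<in>W. choice_prob N W a) = (\<Sum>a\<in>{a\<in>W. a \<in> largest_gaps N W}. 1 / real (card (largest_gaps N W)))"
    unfolding choice_prob_def using sum.inter_filter[OF assms(1), of "\<lambda>a. 1 / real (card (largest_gaps N W))" "\<lambda>a. a \<in> largest_gaps N W"] by simp
  also have "{a\<in>W. a \<in> largest_gaps N W} = largest_gaps N W" using largest_gaps_subset by blast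
  finally show ?thesis using c by simp
qed

definition lattice_subsets :: "nat \<Rightarrow> nat \<Rightarrow> nat \<Rightarrow> nat set set" where
  "lattice_subsets N Lam m = {W. W \<subseteq> lattice N Lam \<and> card W = m}"

lemma finite_lattice_subsets: "finite (lattice_subsets N Lam m)"
proof -
  have "lattice_subsets N Lam m \<subseteq> Pow (lattice N Lam)" unfolding lattice_subsets_def by blast
  moreover have "finite (Pow (lattice N Lam))" using finite_lattice by (rule finite_Pow_iff[THEN iffD2])
  ultimately show ?thesis by (rule finite_subset)
qed

lemma finite_lattice_subsets_at: "finite (lattice_subsets_at N Lam m t)"
proof -
  have "lattice_subsets_at N Lam m t \<subseteq> Pow (lattice N Lam)" unfolding lattice_subsets_at_def by blast
  moreover have "finite (Pow (lattice N Lam))" using finite_lattice by (rule finite_Pow_iff[THEN iffD2])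
  ultimately show ?thesis by (rule finite_subset)
qed

lemma card_lattice: assumes "0 < Lam" "N = e * Lam" shows "card (lattice N Lam) = e"
proof -
  have "card ((\<lambda>j. (j+1)*Lam) ` {..<e}) = card {..<e}" by (rule card_image[OF lattice_eq_image_next(2)[OF assms]])
  then show ?thesis unfolding lattice_eq_image_next(1)[OF assms, symmetric] by simp
qed

lemma card_off_lattice: assumes "0 < Lam" "N = e * Lam" shows "card (off_lattice N Lam) = e * (Lam - 1)"
proof -
  have "card ((\<lambda>(j,r). j*Lam + r) ` ({..<e} \<times> {1..<Lam})) = card ({..<e} \<times> {1..<Lam})"
    by (rule card_image[OF off_lattice_eq_image(2)[OF assms]])
  also have "\<dots> = e * (Lam - 1)" by (simp add: card_cartesian_product)
  finally show ?thesis unfolding off_lattice_eq_image(1)[OF assms, symmetric] .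
qed

lemma card_lattice_subsets: assumes "0 < Lam" "N = e * Lam" shows "card (lattice_subsets N Lam m) = e choose m"
  unfolding lattice_subsets_def using n_subsets[OF finite_lattice, of N Lam m] card_lattice[OF assms] by simp

lemma sum_lattice_subsets_at_swap:
  "(\<Sum>t\<in>lattice N Lam. \<Sum>W\<in>lattice_subsets_at N Lam m t. f W t) = (\<Sum>W\<in>lattice_subsets N Lam m. \<Sum>t\<in>W. f W t)"
proof -
  have F: "lattice_subsets_at N Lam m t = {W. W \<in> lattice_subsets N Lam m \<and> t \<in> W}" for t unfolding lattice_subsets_at_def lattice_subsets_def by blast
  have "(\<Sum>t\<in>lattice N Lam. \<Sum>W\<in>lattice_subsets_at N Lam m t. f W t)
      = (\<Sum>W\<in>lattice_subsets N Lam m. \<Sum>t\<in>{t. t \<in> lattice N Lam \<and> t \<in> W}. f W t)"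
    unfolding F by (rule sum.swap_restrict[OF finite_lattice finite_lattice_subsets])
  also have "\<dots> = (\<Sum>W\<in>lattice_subsets N Lam m. \<Sum>t\<in>W. f W t)"
  proof (rule sum.cong[OF refl])
    fix W assume "W \<in> lattice_subsets N Lam m"
    then have "{t. t \<in> lattice N Lam \<and> t \<in> W} = W" unfolding lattice_subsets_def by blast
    then show "(\<Sum>t\<in>{t. t \<in> lattice N Lam \<and> t \<in> W}. f W t) = (\<Sum>t\<in>W. f W t)" by simp
  qed
  finally show ?thesis .
qed

lemma lattice_subsets_nonempty: "1 \<le> m \<Longrightarrow> W \<in> lattice_subsets N Lam m \<Longrightarrow> finite W \<and> W \<noteq> {}"
proof -
  assume m: "1 \<le> m" and W: "W \<in> lattice_subsets N Lam m"
  have f: "finite W" using W finite_lattice[of N Lam] unfolding lattice_subsets_def by (blast intro: finite_subset)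
  have "card W = m" using W unfolding lattice_subsets_def by blast
  then have "W \<noteq> {}" using m by auto
  then show ?thesis using f by blast
qed

lemma sum_sum_choice_prob_lattice_subsets: "1 \<le> m \<Longrightarrow> 0 < Lam \<Longrightarrow> N = e * Lam \<Longrightarrow>
  (\<Sum>W\<in>lattice_subsets N Lam m. \<Sum>t\<in>W. choice_prob N W t) = real (e choose m)"
proof -
  assume a: "1 \<le> m" "0 < Lam" "N = e * Lam"
  have "(\<Sum>W\<in>lattice_subsets N Lam m. \<Sum>t\<in>W. choice_prob N W t) = (\<Sum>W\<in>lattice_subsets N Lam m. 1)"
  proof (rule sum.cong[OF refl])
    fix W assume "W \<in> lattice_subsets N Lam m"
    then have "finite W" "W \<noteq> {}" using lattice_subsets_nonempty[OF a(1)] by blast+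
    then show "(\<Sum>t\<in>W. choice_prob N W t) = 1" by (rule sum_choice_prob)
  qed
  then show ?thesis using card_lattice_subsets[OF a(2,3)] by simp
qed

lemma sum_choice_prob_hotspot:
  assumes L: "0 < Lam" "Lam dvd N" "0 < N" "N = e * Lam" and m: "1 \<le> m"
  shows "real e * (\<Sum>W\<in>lattice_subsets_at N Lam m N. choice_prob N W N) = real (e choose m)"
proof -
  have "(\<Sum>t\<in>lattice N Lam. \<Sum>W\<in>lattice_subsets_at N Lam m t. choice_prob N W t)
      = (\<Sum>t\<in>lattice N Lam. \<Sum>W\<in>lattice_subsets_at N Lam m N. choice_prob N W N)"
    by (rule sum.cong[OF refl]) (rule sum_choice_prob_lattice_subsets_at[OF L(1-3)])
  also have "\<dots> = real e * (\<Sum>W\<in>lattice_subsets_at N Lam m N. choice_prob N W N)" using card_lattice[OF L(1,4)] by simp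
  finally show ?thesis using sum_lattice_subsets_at_swap sum_sum_choice_prob_lattice_subsets[OF m L(1,4)] by metis
qed

lemma card_lattice_subsets_at:
  assumes L: "0 < Lam" "Lam dvd N" "0 < N" "N = e * Lam"
  shows "real e * real (card (lattice_subsets_at N Lam m N)) = real m * real (e choose m)"
proof -
  have "(\<Sum>t\<in>lattice N Lam. \<Sum>W\<in>lattice_subsets_at N Lam m t. (1::real))
      = (\<Sum>t\<in>lattice N Lam. real (card (lattice_subsets_at N Lam m N)))"
  proof (rule sum.cong[OF refl])
    fix t assume t: "t \<in> lattice N Lam"
    have "card (lattice_subsets_at N Lam m t) = card (lattice_subsets_at N Lam m N)"
      using bij_betw_same_card[OF bij_rot_lattice_subsets_at[OF L(1-3) t]] by simp
    then show "(\<Sum>W\<in>lattice_subsets_at N Lam m t. (1::real)) = real (card (lattice_subsets_at N Lam m N))" by simp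
  qed
  also have "\<dots> = real e * real (card (lattice_subsets_at N Lam m N))" using card_lattice[OF L(1,4)] by simp
  finally have 1: "(\<Sum>t\<in>lattice N Lam. \<Sum>W\<in>lattice_subsets_at N Lam m t. (1::real)) = real e * real (card (lattice_subsets_at N Lam m N))" .
  have "(\<Sum>W\<in>lattice_subsets N Lam m. \<Sum>t\<in>W. (1::real)) = (\<Sum>W\<in>lattice_subsets N Lam m. real m)"
  proof (rule sum.cong[OF refl])
    fix W assume "W \<in> lattice_subsets N Lam m"
    then have "card W = m" unfolding lattice_subsets_def by blast
    then show "(\<Sum>t\<in>W. (1::real)) = real m" by simp
  qed
  also have "\<dots> = real m * real (e choose m)" using card_lattice_subsets[OF L(1,4)] by simp
  finally show ?thesis using 1 sum_lattice_subsets_at_swap[of "\<lambda>W t. (1::real)" N Lam m] by simp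
qed

lemma sum_choice_prob_hotspot_off:
  assumes L: "0 < Lam" "Lam dvd N" "0 < N" "N = e * Lam" and m: "1 \<le> m"
  shows "real e * (\<Sum>S\<in>off_lattice N Lam. \<Sum>T\<in>lattice_subsets_at N Lam m N. choice_prob N (insert S T) N)
     = real (card (off_lattice N Lam)) * real (e choose m) - (\<Sum>S\<in>off_lattice N Lam. \<Sum>T\<in>lattice_subsets N Lam m. choice_prob N (insert S T) S)"
proof -
  have "(\<Sum>t\<in>lattice N Lam. \<Sum>S\<in>off_lattice N Lam. \<Sum>T\<in>lattice_subsets_at N Lam m t. choice_prob N (insert S T) t)
      = (\<Sum>t\<in>lattice N Lam. \<Sum>S\<in>off_lattice N Lam. \<Sum>T\<in>lattice_subsets_at N Lam m N. choice_prob N (insert S T) N)"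
    by (rule sum.cong[OF refl]) (rule sum_choice_prob_off_lattice_subsets_at[OF L(1-3)])
  also have "\<dots> = real e * (\<Sum>S\<in>off_lattice N Lam. \<Sum>T\<in>lattice_subsets_at N Lam m N. choice_prob N (insert S T) N)"
    using card_lattice[OF L(1,4)] by simp
  finally have 1: "(\<Sum>t\<in>lattice N Lam. \<Sum>S\<in>off_lattice N Lam. \<Sum>T\<in>lattice_subsets_at N Lam m t. choice_prob N (insert S T) t)
      = real e * (\<Sum>S\<in>off_lattice N Lam. \<Sum>T\<in>lattice_subsets_at N Lam m N. choice_prob N (insert S T) N)" .
  have "(\<Sum>t\<in>lattice N Lam. \<Sum>S\<in>off_lattice N Lam. \<Sum>T\<in>lattice_subsets_at N Lam m t. choice_prob N (insert S T) t)
      = (\<Sum>S\<in>off_lattice N Lam. \<Sum>t\<in>lattice N Lam. \<Sum>T\<in>lattice_subsets_at N Lam m t. choice_prob N (insert S T) t)"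
    by (rule sum.swap)
  also have "\<dots> = (\<Sum>S\<in>off_lattice N Lam. \<Sum>T\<in>lattice_subsets N Lam m. \<Sum>t\<in>T. choice_prob N (insert S T) t)"
    by (rule sum.cong[OF refl]) (rule sum_lattice_subsets_at_swap)
  also have "\<dots> = (\<Sum>S\<in>off_lattice N Lam. \<Sum>T\<in>lattice_subsets N Lam m. 1 - choice_prob N (insert S T) S)"
  proof (intro sum.cong[OF refl])
    fix S T assume S: "S \<in> off_lattice N Lam" and T: "T \<in> lattice_subsets N Lam m"
    have ST: "S \<notin> T" using S T unfolding off_lattice_def lattice_def lattice_subsets_def by auto
    have fT: "finite T" using lattice_subsets_nonempty[OF m T] by simp
    have "(\<Sum>a\<in>insert S T. choice_prob N (insert S T) a) = 1" using sum_choice_prob[of "insert S T" N] fT by simp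
    then have "choice_prob N (insert S T) S + (\<Sum>a\<in>T. choice_prob N (insert S T) a) = 1" using fT ST by simp
    then show "(\<Sum>t\<in>T. choice_prob N (insert S T) t) = 1 - choice_prob N (insert S T) S" by simp
  qed
  also have "\<dots> = (\<Sum>S\<in>off_lattice N Lam. real (e choose m) - (\<Sum>T\<in>lattice_subsets N Lam m. choice_prob N (insert S T) S))"
    using card_lattice_subsets[OF L(1,4)] by (simp add: sum_subtractf)
  also have "\<dots> = real (card (off_lattice N Lam)) * real (e choose m) - (\<Sum>S\<in>off_lattice N Lam. \<Sum>T\<in>lattice_subsets N Lam m. choice_prob N (insert S T) S)"
    by (simp add: sum_subtractf)
  finally show ?thesis using 1 by simp
qed

lemma sum_choice_prob_insert_lattice:
  assumes L: "0 < Lam" "Lam dvd N" "0 < N" "N = e * Lam"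
  shows "(\<Sum>T\<in>lattice_subsets N Lam m. \<Sum>s\<in>lattice N Lam - T. choice_prob N (insert s T) s) = real (e choose (m+1))"
proof -
  have "(\<Sum>T\<in>lattice_subsets N Lam m. \<Sum>s\<in>lattice N Lam - T. choice_prob N (insert s T) s)
      = (\<Sum>T\<in>lattice_subsets N Lam m. \<Sum>s\<in>{s. s \<in> lattice N Lam \<and> s \<notin> T}. choice_prob N (insert s T) s)"
    by (intro sum.cong) auto
  also have "\<dots> = (\<Sum>s\<in>lattice N Lam. \<Sum>T\<in>{T. T \<in> lattice_subsets N Lam m \<and> s \<notin> T}. choice_prob N (insert s T) s)"
    by (rule sum.swap_restrict[OF finite_lattice_subsets finite_lattice])
  also have "\<dots> = (\<Sum>s\<in>lattice N Lam. \<Sum>W\<in>lattice_subsets_at N Lam (m+1) s. choice_prob N W s)"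
  proof (rule sum.cong[OF refl])
    fix s assume s: "s \<in> lattice N Lam"
    have bij: "bij_betw (insert s) {T. T \<in> lattice_subsets N Lam m \<and> s \<notin> T} (lattice_subsets_at N Lam (m+1) s)"
    proof (rule bij_betw_byWitness[where f'="\<lambda>W. W - {s}"])
      show "\<forall>a\<in>{T. T \<in> lattice_subsets N Lam m \<and> s \<notin> T}. insert s a - {s} = a" by blast
      show "\<forall>a'\<in>lattice_subsets_at N Lam (m + 1) s. insert s (a' - {s}) = a'" unfolding lattice_subsets_at_def by blast
      show "insert s ` {T. T \<in> lattice_subsets N Lam m \<and> s \<notin> T} \<subseteq> lattice_subsets_at N Lam (m + 1) s"
      proof
        fix W assume "W \<in> insert s ` {T. T \<in> lattice_subsets N Lam m \<and> s \<notin> T}"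
        then obtain T where T: "T \<in> lattice_subsets N Lam m" "s \<notin> T" "W = insert s T" by blast
        have "finite T" using T finite_lattice unfolding lattice_subsets_def by (auto intro: finite_subset)
        then show "W \<in> lattice_subsets_at N Lam (m + 1) s" using T s unfolding lattice_subsets_at_def lattice_subsets_def by auto
      qed
      show "(\<lambda>W. W - {s}) ` lattice_subsets_at N Lam (m + 1) s \<subseteq> {T. T \<in> lattice_subsets N Lam m \<and> s \<notin> T}"
      proof
        fix V assume "V \<in> (\<lambda>W. W - {s}) ` lattice_subsets_at N Lam (m + 1) s"
        then obtain W where W: "W \<in> lattice_subsets_at N Lam (m+1) s" "V = W - {s}" by blast
        have "finite W" using W finite_lattice unfolding lattice_subsets_at_def by (auto intro: finite_subset)
        then show "V \<in> {T. T \<in> lattice_subsets N Lam m \<and> s \<notin> T}" using W unfolding lattice_subsets_at_def lattice_subsets_def by auto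
      qed
    qed
    show "(\<Sum>T\<in>{T. T \<in> lattice_subsets N Lam m \<and> s \<notin> T}. choice_prob N (insert s T) s)
        = (\<Sum>W\<in>lattice_subsets_at N Lam (m+1) s. choice_prob N W s)"
      using sum.reindex_bij_betw[OF bij, of "\<lambda>W. choice_prob N W s"] by simp
  qed
  also have "\<dots> = (\<Sum>W\<in>lattice_subsets N Lam (m+1). \<Sum>t\<in>W. choice_prob N W t)" by (rule sum_lattice_subsets_at_swap)
  also have "\<dots> = real (e choose (m+1))" by (rule sum_sum_choice_prob_lattice_subsets) (use L in auto)
  finally show ?thesis .
qed

lemma off_sender_ratio_algebra:
  fixes E l a Bn Bn1 c X P :: real
  assumes E: "E > 0" and l: "l \<ge> 1" and a: "a \<ge> 0" and Bn: "Bn \<ge> 0"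
    and hX: "E * X = E * a * Bn - P" and hP1: "a * Bn1 \<le> P" and hP2: "P \<le> a * Bn1 + a * Bn"
    and hc: "E * c = l * Bn" and hB: "(l + 1) * Bn1 = (E - l) * Bn"
  shows "1 / (l + 1) * (1 - 1 / (l * E)) * (E * a * c) \<le> X \<and> X \<le> 1 / (l + 1) * (1 + 1 / E) * (E * a * c)"
proof -
  have l1: "l + 1 > 0" using l by simp
  have u1: "(l+1) * P \<ge> (l+1) * (a * Bn1)" using hP1 l1 by (intro mult_left_mono) auto
  have "a * ((l+1) * Bn1) = a * ((E - l) * Bn)" using hB by simp
  then have u2: "(l+1) * (a * Bn1) = a * (E - l) * Bn" by (simp add: algebra_simps)
  have up: "(l+1) * (E * X) \<le> a * (E + 1) * (E * c)"
  proof -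
    have "(l+1) * (E * X) = (l+1) * (E * a * Bn - P)" using hX by simp
    also have "\<dots> = (l+1) * (E * a * Bn) - (l+1) * P" by (simp add: algebra_simps)
    also have "\<dots> \<le> (l+1) * (E * a * Bn) - a * (E - l) * Bn" using u1 u2 by linarith
    also have "\<dots> = a * (E + 1) * (l * Bn)" by (simp add: algebra_simps)
    also have "\<dots> = a * (E + 1) * (E * c)" using hc by simp
    finally show ?thesis .
  qed
  have d1: "(l+1) * P \<le> (l+1) * (a * Bn1 + a * Bn)" using hP2 l1 by (intro mult_left_mono) auto
  have lo: "a * (l * E - 1) * (E * c) \<le> l * ((l+1) * (E * X))"
  proof -
    have "(l+1) * (E * X) = (l+1) * (E * a * Bn - P)" using hX by simp
    also have "\<dots> = (l+1) * (E * a * Bn) - (l+1) * P" by (simp add: algebra_simps)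
    also have "\<dots> \<ge> (l+1) * (E * a * Bn) - (a * (E - l) * Bn + (l+1) * (a * Bn))"
      using d1 u2 by (simp add: algebra_simps)
    finally have "(l+1) * (E * X) \<ge> a * Bn * (l * E - 1)" by (simp add: algebra_simps)
    then have "l * ((l+1) * (E * X)) \<ge> l * (a * Bn * (l * E - 1))" using l by (intro mult_left_mono) auto
    also have "l * (a * Bn * (l * E - 1)) = a * (l * E - 1) * (l * Bn)" by (simp add: algebra_simps)
    also have "\<dots> = a * (l * E - 1) * (E * c)" using hc by simp
    finally show ?thesis .
  qed
  have eq1: "1 / (l + 1) * (1 + 1 / E) * (E * a * c) = a * (E + 1) * (E * c) / ((l + 1) * E)"
    using E l1 by (simp add: field_simps)
  have eq2: "1 / (l + 1) * (1 - 1 / (l * E)) * (E * a * c) = a * (l * E - 1) * (E * c) / (l * ((l + 1) * E))"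
    using E l1 l by (simp add: field_simps)
  have p1: "(l + 1) * E > 0" using E l1 by simp
  have p2: "l * ((l + 1) * E) > 0" using E l1 l by simp
  have x1: "X * ((l+1)*E) = (l+1)*(E*X)" by (simp add: algebra_simps)
  have x2: "X * (l * ((l+1)*E)) = l * ((l+1)*(E*X))" by (simp add: algebra_simps)
  have "X \<le> a * (E + 1) * (E * c) / ((l + 1) * E)"
    unfolding pos_le_divide_eq[OF p1] x1 using up .
  moreover have "a * (l * E - 1) * (E * c) / (l * ((l + 1) * E)) \<le> X"
    unfolding pos_divide_le_eq[OF p2] x2 using lo .
  ultimately show ?thesis using eq1 eq2 by simp
qed

lemma hotspot_in_lattice: "0 < Lam \<Longrightarrow> Lam dvd N \<Longrightarrow> 0 < N \<Longrightarrow> N \<in> lattice N Lam"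
  unfolding lattice_def by simp

lemma sum_lattice_sender_reindex:
  assumes NL: "N \<in> lattice N Lam"
  shows "(\<Sum>S\<in>lattice N Lam - {N}. \<Sum>T\<in>{T. T \<subseteq> lattice N Lam - {N} - {S} \<and> card T = k}. g (insert S (insert N T)))
       = real (k+1) * (\<Sum>W\<in>lattice_subsets_at N Lam (k+2) N. (g W :: real))"
proof -
  have "(\<Sum>S\<in>lattice N Lam - {N}. \<Sum>T\<in>{T. T \<subseteq> lattice N Lam - {N} - {S} \<and> card T = k}. g (insert S (insert N T)))
      = (\<Sum>S\<in>lattice N Lam - {N}. \<Sum>W\<in>{W. W \<in> lattice_subsets_at N Lam (k+2) N \<and> S \<in> W}. g W)"
  proof (rule sum.cong[OF refl])
    fix S assume S: "S \<in> lattice N Lam - {N}"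
    have bij: "bij_betw (\<lambda>T. insert S (insert N T)) {T. T \<subseteq> lattice N Lam - {N} - {S} \<and> card T = k}
        {W. W \<in> lattice_subsets_at N Lam (k+2) N \<and> S \<in> W}"
    proof (rule bij_betw_byWitness[where f'="\<lambda>W. W - {N, S}"])
      show "\<forall>a\<in>{T. T \<subseteq> lattice N Lam - {N} - {S} \<and> card T = k}. insert S (insert N a) - {N, S} = a" by blast
      show "\<forall>a'\<in>{W. W \<in> lattice_subsets_at N Lam (k + 2) N \<and> S \<in> W}. insert S (insert N (a' - {N, S})) = a'"
        unfolding lattice_subsets_at_def by blast
      show "(\<lambda>T. insert S (insert N T)) ` {T. T \<subseteq> lattice N Lam - {N} - {S} \<and> card T = k}
          \<subseteq> {W. W \<in> lattice_subsets_at N Lam (k + 2) N \<and> S \<in> W}"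
      proof
        fix W assume "W \<in> (\<lambda>T. insert S (insert N T)) ` {T. T \<subseteq> lattice N Lam - {N} - {S} \<and> card T = k}"
        then obtain T where T: "T \<subseteq> lattice N Lam - {N} - {S}" "card T = k" "W = insert S (insert N T)" by blast
        have fT: "finite T" using T(1) finite_lattice[of N Lam] by (blast intro: finite_subset)
        have "N \<notin> T" "S \<notin> T" "S \<noteq> N" using T S by auto
        then have "card W = k + 2" using T fT by simp
        moreover have "W \<subseteq> lattice N Lam" using T S NL by blast
        ultimately show "W \<in> {W. W \<in> lattice_subsets_at N Lam (k + 2) N \<and> S \<in> W}" unfolding lattice_subsets_at_def using T by blast
      qed
      show "(\<lambda>W. W - {N, S}) ` {W. W \<in> lattice_subsets_at N Lam (k + 2) N \<and> S \<in> W}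
          \<subseteq> {T. T \<subseteq> lattice N Lam - {N} - {S} \<and> card T = k}"
      proof
        fix V assume "V \<in> (\<lambda>W. W - {N, S}) ` {W. W \<in> lattice_subsets_at N Lam (k + 2) N \<and> S \<in> W}"
        then obtain W where W: "W \<in> lattice_subsets_at N Lam (k+2) N" "S \<in> W" "V = W - {N, S}" by blast
        have Ws: "W \<subseteq> lattice N Lam" "card W = k + 2" "N \<in> W" using W unfolding lattice_subsets_at_def by auto
        have fW: "finite W" using Ws finite_lattice[of N Lam] by (blast intro: finite_subset)
        have SN: "S \<noteq> N" using S by blast
        have "card (W - {N, S}) = card W - card {N, S}" using Ws W(2) fW by (intro card_Diff_subset) auto
        then have "card V = k" using W(3) Ws SN by simp
        moreover have "V \<subseteq> lattice N Lam - {N} - {S}" using W Ws by blast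
        ultimately show "V \<in> {T. T \<subseteq> lattice N Lam - {N} - {S} \<and> card T = k}" by blast
      qed
    qed
    show "(\<Sum>T\<in>{T. T \<subseteq> lattice N Lam - {N} - {S} \<and> card T = k}. g (insert S (insert N T)))
        = (\<Sum>W\<in>{W. W \<in> lattice_subsets_at N Lam (k+2) N \<and> S \<in> W}. g W)"
      using sum.reindex_bij_betw[OF bij, of g] by simp
  qed
  also have "\<dots> = (\<Sum>W\<in>lattice_subsets_at N Lam (k+2) N. \<Sum>S\<in>{S. S \<in> lattice N Lam - {N} \<and> S \<in> W}. g W)"
    by (rule sum.swap_restrict) (simp_all add: finite_lattice finite_lattice_subsets_at)
  also have "\<dots> = (\<Sum>W\<in>lattice_subsets_at N Lam (k+2) N. real (k+1) * g W)"
  proof (rule sum.cong[OF refl])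
    fix W assume W: "W \<in> lattice_subsets_at N Lam (k+2) N"
    have Ws: "W \<subseteq> lattice N Lam" "card W = k + 2" "N \<in> W" using W unfolding lattice_subsets_at_def by auto
    have fW: "finite W" using Ws finite_lattice[of N Lam] by (blast intro: finite_subset)
    have e: "{S. S \<in> lattice N Lam - {N} \<and> S \<in> W} = W - {N}" using Ws by blast
    have "card (W - {N}) = k + 1" using Ws fW by simp
    then show "(\<Sum>S\<in>{S. S \<in> lattice N Lam - {N} \<and> S \<in> W}. g W) = real (k+1) * g W" unfolding e by simp
  qed
  also have "\<dots> = real (k+1) * (\<Sum>W\<in>lattice_subsets_at N Lam (k+2) N. g W)" by (simp add: sum_distrib_left)
  finally show ?thesis .
qed

lemma sum_insert_hotspot_reindex:
  assumes NL: "N \<in> lattice N Lam"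
  shows "(\<Sum>T\<in>{T. T \<subseteq> lattice N Lam - {N} \<and> card T = k}. g (insert N T))
       = (\<Sum>W\<in>lattice_subsets_at N Lam (k+1) N. (g W :: real))"
proof -
  have bij: "bij_betw (insert N) {T. T \<subseteq> lattice N Lam - {N} \<and> card T = k} (lattice_subsets_at N Lam (k+1) N)"
  proof (rule bij_betw_byWitness[where f'="\<lambda>W. W - {N}"])
    show "\<forall>a\<in>{T. T \<subseteq> lattice N Lam - {N} \<and> card T = k}. insert N a - {N} = a" by blast
    show "\<forall>a'\<in>lattice_subsets_at N Lam (k + 1) N. insert N (a' - {N}) = a'" unfolding lattice_subsets_at_def by blast
    show "insert N ` {T. T \<subseteq> lattice N Lam - {N} \<and> card T = k} \<subseteq> lattice_subsets_at N Lam (k + 1) N"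
    proof
      fix W assume "W \<in> insert N ` {T. T \<subseteq> lattice N Lam - {N} \<and> card T = k}"
      then obtain T where T: "T \<subseteq> lattice N Lam - {N}" "card T = k" "W = insert N T" by blast
      have fT: "finite T" using T(1) finite_lattice[of N Lam] by (blast intro: finite_subset)
      have "N \<notin> T" using T by auto
      then have "card W = k + 1" using T fT by simp
      then show "W \<in> lattice_subsets_at N Lam (k + 1) N" unfolding lattice_subsets_at_def using T NL by blast
    qed
    show "(\<lambda>W. W - {N}) ` lattice_subsets_at N Lam (k + 1) N \<subseteq> {T. T \<subseteq> lattice N Lam - {N} \<and> card T = k}"
    proof
      fix V assume "V \<in> (\<lambda>W. W - {N}) ` lattice_subsets_at N Lam (k + 1) N"
      then obtain W where W: "W \<in> lattice_subsets_at N Lam (k+1) N" "V = W - {N}" by blast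
      have Ws: "W \<subseteq> lattice N Lam" "card W = k + 1" "N \<in> W" using W unfolding lattice_subsets_at_def by auto
      have fW: "finite W" using Ws finite_lattice[of N Lam] by (blast intro: finite_subset)
      have "card V = k" using W Ws fW by simp
      then show "V \<in> {T. T \<subseteq> lattice N Lam - {N} \<and> card T = k}" using W Ws by blast
    qed
  qed
  show ?thesis using sum.reindex_bij_betw[OF bij, of g] by simp
qed

lemma binomial_succ_ratio: "ell \<le> e \<Longrightarrow> (real ell + 1) * real (e choose (ell+1)) = (real e - real ell) * real (e choose ell)"
proof -
  assume le: "ell \<le> e"
  have "Suc ell * (e choose Suc ell) = e * ((e - 1) choose ell)" by (rule binomial_absorption)
  moreover have "(e - ell) * (e choose ell) = e * ((e - 1) choose ell)" by (rule binomial_absorb_comp)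
  ultimately have "(ell + 1) * (e choose (ell+1)) = (e - ell) * (e choose ell)" by simp
  then have "real ((ell + 1) * (e choose (ell+1))) = real ((e - ell) * (e choose ell))" by simp
  then show ?thesis using le by (simp add: of_nat_diff algebra_simps)
qed

text \<open>Rotation averaging expresses the hotspot's total weight against off-lattice senders through
  the senders' own total weight \<open>P\<close>, and comparing each sender with its neighbouring lattice nodes
  pins \<open>P\<close> between \<open>(Lam-1) C(e,ell+1)\<close> and \<open>(Lam-1) (C(e,ell+1) + C(e,ell))\<close>.\<close>
lemma off_sender_bounds:
  assumes L: "0 < Lam" "Lam dvd N" "0 < N" "N = e * Lam" and ell: "1 \<le> ell" "ell \<le> e"
  shows "1 / (real ell + 1) * (1 - 1 / (real ell * real e)) * (real (card (off_lattice N Lam)) * real (card (lattice_subsets_at N Lam ell N)))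
           \<le> (\<Sum>S\<in>off_lattice N Lam. \<Sum>T\<in>lattice_subsets_at N Lam ell N. choice_prob N (insert S T) N)
       \<and> (\<Sum>S\<in>off_lattice N Lam. \<Sum>T\<in>lattice_subsets_at N Lam ell N. choice_prob N (insert S T) N)
           \<le> 1 / (real ell + 1) * (1 + 1 / real e) * (real (card (off_lattice N Lam)) * real (card (lattice_subsets_at N Lam ell N)))"
proof -
  define X where "X = (\<Sum>S\<in>off_lattice N Lam. \<Sum>T\<in>lattice_subsets_at N Lam ell N. choice_prob N (insert S T) N)"
  define P where "P = (\<Sum>S\<in>off_lattice N Lam. \<Sum>T\<in>lattice_subsets N Lam ell. choice_prob N (insert S T) S)"
  define a where "a = real (Lam - 1)"
  define Bn where "Bn = real (e choose ell)"
  define Bn1 where "Bn1 = real (e choose (ell+1))"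
  define c where "c = real (card (lattice_subsets_at N Lam ell N))"
  have e0: "0 < e" using ell by simp
  have cO: "real (card (off_lattice N Lam)) = real e * a" unfolding a_def using card_off_lattice[OF L(1,4)] by simp
  have hX: "real e * X = real e * a * Bn - P"
    unfolding X_def P_def Bn_def using sum_choice_prob_hotspot_off[OF L ell(1)] cO by simp
  have Pswap: "P = (\<Sum>T\<in>lattice_subsets N Lam ell. \<Sum>S\<in>off_lattice N Lam. choice_prob N (insert S T) S)"
    unfolding P_def by (rule sum.swap)
  have TT: "T \<subseteq> lattice N Lam \<and> finite T \<and> T \<noteq> {}" if "T \<in> lattice_subsets N Lam ell" for T
    using lattice_subsets_nonempty[OF ell(1) that] that unfolding lattice_subsets_def by blast
  have hP1: "a * Bn1 \<le> P"
  proof -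
    have "a * Bn1 = a * (\<Sum>T\<in>lattice_subsets N Lam ell. (\<Sum>s\<in>lattice N Lam - T. choice_prob N (insert s T) s))"
      unfolding Bn1_def using sum_choice_prob_insert_lattice[OF L, of ell] by simp
    also have "\<dots> = (\<Sum>T\<in>lattice_subsets N Lam ell. a * (\<Sum>s\<in>lattice N Lam - T. choice_prob N (insert s T) s))"
      by (rule sum_distrib_left)
    also have "\<dots> \<le> (\<Sum>T\<in>lattice_subsets N Lam ell. \<Sum>S\<in>off_lattice N Lam. choice_prob N (insert S T) S)"
    proof (rule sum_mono)
      fix T assume "T \<in> lattice_subsets N Lam ell"
      then have T: "T \<subseteq> lattice N Lam" "finite T" "T \<noteq> {}" using TT by blast+
      show "a * (\<Sum>s\<in>lattice N Lam - T. choice_prob N (insert s T) s) \<le> (\<Sum>S\<in>off_lattice N Lam. choice_prob N (insert S T) S)"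
        unfolding a_def by (rule sum_choice_prob_off_lower[OF L(1,4,2) T])
    qed
    finally show ?thesis using Pswap by simp
  qed
  have hP2: "P \<le> a * Bn1 + a * Bn"
  proof -
    have "P \<le> (\<Sum>T\<in>lattice_subsets N Lam ell. a * (\<Sum>s\<in>lattice N Lam - T. choice_prob N (insert s T) s) + a)"
      unfolding Pswap
    proof (rule sum_mono)
      fix T assume "T \<in> lattice_subsets N Lam ell"
      then have T: "T \<subseteq> lattice N Lam" "finite T" "T \<noteq> {}" using TT by blast+
      show "(\<Sum>S\<in>off_lattice N Lam. choice_prob N (insert S T) S) \<le> a * (\<Sum>s\<in>lattice N Lam - T. choice_prob N (insert s T) s) + a"
        unfolding a_def by (rule sum_choice_prob_off_upper[OF L(1,4,2) T])
    qed
    also have "\<dots> = a * (\<Sum>T\<in>lattice_subsets N Lam ell. \<Sum>s\<in>lattice N Lam - T. choice_prob N (insert s T) s) + a * real (card (lattice_subsets N Lam ell))"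
      by (simp add: sum.distrib sum_distrib_left)
    also have "\<dots> = a * Bn1 + a * Bn" unfolding Bn1_def Bn_def using sum_choice_prob_insert_lattice[OF L, of ell] card_lattice_subsets[OF L(1,4)] by simp
    finally show ?thesis .
  qed
  have hc: "real e * c = real ell * Bn" unfolding c_def Bn_def using card_lattice_subsets_at[OF L] by simp
  have hB: "(real ell + 1) * Bn1 = (real e - real ell) * Bn" unfolding Bn1_def Bn_def by (rule binomial_succ_ratio[OF ell(2)])
  have r: "1 / (real ell + 1) * (1 - 1 / (real ell * real e)) * (real e * a * c) \<le> X \<and>
           X \<le> 1 / (real ell + 1) * (1 + 1 / real e) * (real e * a * c)"
    by (rule off_sender_ratio_algebra[OF _ _ _ _ hX hP1 hP2 hc hB]) (use e0 ell in \<open>auto simp: a_def Bn_def\<close>)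
  have cc: "real (card (off_lattice N Lam)) * real (card (lattice_subsets_at N Lam ell N)) = real e * a * c" using cO unfolding c_def by simp
  show ?thesis using r unfolding cc X_def .
qed

lemma lattice_sender_exact:
  assumes L: "0 < Lam" "Lam dvd N" "0 < N" "N = e * Lam" and ell: "1 \<le> ell" "ell \<le> e"
  shows "(real ell + 1) * (\<Sum>S\<in>lattice N Lam - {N}. \<Sum>T\<in>{T. T \<subseteq> lattice N Lam - {N} - {S} \<and> card T = ell - 1}. choice_prob N (insert S (insert N T)) N)
        = (\<Sum>S\<in>lattice N Lam - {N}. \<Sum>T\<in>{T. T \<subseteq> lattice N Lam - {N} - {S} \<and> card T = ell - 1}. 1)"
proof -
  have NL: "N \<in> lattice N Lam" using hotspot_in_lattice[OF L(1-3)] .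
  have k: "ell - 1 + 1 = ell" "ell - 1 + 2 = ell + 1" using ell by auto
  have Y: "(\<Sum>S\<in>lattice N Lam - {N}. \<Sum>T\<in>{T. T \<subseteq> lattice N Lam - {N} - {S} \<and> card T = ell - 1}. choice_prob N (insert S (insert N T)) N)
     = real ell * (\<Sum>W\<in>lattice_subsets_at N Lam (ell+1) N. choice_prob N W N)"
    using sum_lattice_sender_reindex[OF NL, where k="ell - 1" and g="\<lambda>W. choice_prob N W N"] k by simp
  have C: "(\<Sum>S\<in>lattice N Lam - {N}. \<Sum>T\<in>{T. T \<subseteq> lattice N Lam - {N} - {S} \<and> card T = ell - 1}. (1::real))
     = real ell * real (card (lattice_subsets_at N Lam (ell+1) N))"
    using sum_lattice_sender_reindex[OF NL, where k="ell - 1" and g="\<lambda>W. 1"] k by simp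
  have e1: "real e * (\<Sum>W\<in>lattice_subsets_at N Lam (ell+1) N. choice_prob N W N) = real (e choose (ell+1))" by (rule sum_choice_prob_hotspot[OF L]) simp
  have e2: "real e * real (card (lattice_subsets_at N Lam (ell+1) N)) = real (ell+1) * real (e choose (ell+1))" by (rule card_lattice_subsets_at[OF L])
  have e0: "real e > 0" using ell by simp
  have "real e * ((real ell + 1) * (real ell * (\<Sum>W\<in>lattice_subsets_at N Lam (ell+1) N. choice_prob N W N)))
      = real e * (real ell * real (card (lattice_subsets_at N Lam (ell+1) N)))"
  proof -
    have "real e * ((real ell + 1) * (real ell * (\<Sum>W\<in>lattice_subsets_at N Lam (ell+1) N. choice_prob N W N)))
        = (real ell + 1) * real ell * (real e * (\<Sum>W\<in>lattice_subsets_at N Lam (ell+1) N. choice_prob N W N))" by (simp add: algebra_simps)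
    also have "\<dots> = real ell * (real e * real (card (lattice_subsets_at N Lam (ell+1) N)))" unfolding e1 e2 by (simp add: algebra_simps)
    finally show ?thesis by (simp add: algebra_simps)
  qed
  then have "(real ell + 1) * (real ell * (\<Sum>W\<in>lattice_subsets_at N Lam (ell+1) N. choice_prob N W N)) = real ell * real (card (lattice_subsets_at N Lam (ell+1) N))"
    using e0 by simp
  then show ?thesis unfolding Y C .
qed

lemma homed_eq_lattice: assumes "0 < Lam" "Lam dvd N" shows "homed N Lam Lam = lattice N Lam"
proof -
  obtain e where e: "N = e * Lam" using assms(2) by (metis dvd_def mult.commute)
  have d: "N div Lam = e" using e assms(1) by simp
  have "homed N Lam Lam = (\<lambda>j. (j+1)*Lam) ` {..<e}" unfolding homed_def d by (auto simp: algebra_simps)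
  then show ?thesis using lattice_eq_image_next(1)[OF assms(1) e] by simp
qed

lemma gap_eq_next_above:
  assumes A: "A \<subseteq> {1..N}" "finite A" and x: "x \<in> A" and above: "\<exists>y\<in>A. x < y"
  shows "gap N A x = Min {y\<in>A. x < y} - x"
proof -
  define m where "m = Min {y\<in>A. x < y}"
  have "m \<in> {y\<in>A. x < y}" unfolding m_def using A(2) above by (intro Min_in) auto
  then have m: "m \<in> A" "x < m" by auto
  have "Min (cw_dist N x ` (A - {x})) = m - x"
  proof (rule Min_eqI)
    fix d assume "d \<in> cw_dist N x ` (A - {x})"
    then obtain a where a: "a \<in> A" "a \<noteq> x" "d = cw_dist N x a" by auto
    have xa: "x \<in> {1..N}" "a \<in> {1..N}" using A(1) a(1) x by auto
    have d: "d = (if x \<le> a then a - x else a + N - x)" unfolding a(3) by (rule cw_dist_eq[OF xa])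
    show "m - x \<le> d"
    proof (cases "x < a")
      case True
      then have "m \<le> a" unfolding m_def using A(2) a by (intro Min_le) auto
      then show ?thesis using d True by simp
    next
      case False
      moreover have "m \<le> N" using m(1) A(1) by auto
      ultimately show ?thesis using d a(2) by auto
    qed
  next
    have "x \<in> {1..N}" "m \<in> {1..N}" using A(1) x m(1) by auto
    then show "m - x \<in> cw_dist N x ` (A - {x})"
      using m cw_dist_eq[of x N m] by (intro image_eqI[where x=m]) auto
  qed (use A in auto)
  then show ?thesis unfolding gap_def m_def .
qed

lemma gap_eq_wrap_around:
  assumes A: "A \<subseteq> {1..N}" "finite A" and x: "x \<in> A" and other: "A - {x} \<noteq> {}" and last: "\<not> (\<exists>y\<in>A. x < y)"
  shows "gap N A x = Min A + N - x"
proof -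
  obtain b where b: "b \<in> A" "b \<noteq> x" using other by auto
  have "b < x" using b last by (auto simp: not_less order.order_iff_strict)
  then have m: "Min A \<in> A" "Min A < x" using Min_in[OF A(2)] Min_le[OF A(2) b(1)] b(1) by auto
  have "Min (cw_dist N x ` (A - {x})) = Min A + N - x"
  proof (rule Min_eqI)
    fix d assume "d \<in> cw_dist N x ` (A - {x})"
    then obtain a where a: "a \<in> A" "a \<noteq> x" "d = cw_dist N x a" by auto
    moreover have "x \<in> {1..N}" "a \<in> {1..N}" using A(1) a(1) x by auto
    moreover have "Min A \<le> a" using A(2) a by simp
    ultimately show "Min A + N - x \<le> d" using last cw_dist_eq[of x N a] by auto
  next
    have "x \<in> {1..N}" "Min A \<in> {1..N}" using A(1) x m(1) by auto
    then show "Min A + N - x \<in> cw_dist N x ` (A - {x})"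
      using m cw_dist_eq[of x N "Min A"] by (intro image_eqI[where x="Min A"]) auto
  qed (use A in auto)
  then show ?thesis unfolding gap_def .
qed
lemma gap_len_eq_gap:
  assumes A: "A \<subseteq> {1..N}" "finite A" and x: "x \<in> A" and c: "2 \<le> card A"
  shows "gap_len N A x = gap N A x"
proof (cases "\<exists>y\<in>A. x < y")
  case True
  then show ?thesis unfolding gap_len_def using gap_eq_next_above[OF A x True] by simp
next
  case False
  have "A - {x} \<noteq> {}"
  proof
    assume "A - {x} = {}"
    then have "A = {x}" using x by blast
    then show False using c by simp
  qed
  then show ?thesis unfolding gap_len_def using gap_eq_wrap_around[OF A x _ False] False by simp
qed

lemma largest_gap_starts_eq:
  assumes A: "A \<subseteq> {1..N}" "finite A" "2 \<le> card A"
  shows "largest_gap_starts N A = (\<lambda>x. x mod N) ` largest_gaps N A"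
proof -
  have "\<And>y. y \<in> A \<Longrightarrow> gap_len N A y = gap N A y" using gap_len_eq_gap[OF A(1,2) _ A(3)] .
  then have "{x\<in>A. \<forall>y\<in>A. gap_len N A y \<le> gap_len N A x} = largest_gaps N A"
    unfolding largest_gaps_def by auto
  then show ?thesis unfolding largest_gap_starts_def by simp
qed

lemma mod_ring_label: "x \<in> {1..N} \<Longrightarrow> x mod N = (if x = N then 0 else (x::nat))"
  by auto

lemma inj_on_mod_ring: "inj_on (\<lambda>x. x mod N) {1..N::nat}"
  by (rule inj_onI) (auto simp: mod_ring_label split: if_splits)

lemma largest_gap_starts_props:
  assumes A: "A \<subseteq> {1..N}" "finite A" "2 \<le> card A" and NA: "N \<in> A"
  shows "measure_pmf.prob (pmf_of_set (largest_gap_starts N A)) {0} = choice_prob N A N"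
proof -
  have sub: "largest_gaps N A \<subseteq> {1..N}" using largest_gaps_subset A by blast
  have L: "largest_gap_starts N A = (\<lambda>x. x mod N) ` largest_gaps N A" by (rule largest_gap_starts_eq[OF A])
  have "finite (largest_gaps N A)" using largest_gaps_subset A(2) by (rule finite_subset)
  then have fin: "finite (largest_gap_starts N A)" unfolding L by simp
  have ne: "largest_gap_starts N A \<noteq> {}" unfolding L using largest_gaps_nonempty[OF A(2)] NA by auto
  have card: "card (largest_gap_starts N A) = card (largest_gaps N A)"
    unfolding L using inj_on_subset[OF inj_on_mod_ring sub] by (rule card_image)
  have "0 \<in> largest_gap_starts N A \<longleftrightarrow> N \<in> largest_gaps N A"
    unfolding L using sub by (force simp: mod_ring_label split: if_splits)
  then have "largest_gap_starts N A \<inter> {0} = (if N \<in> largest_gaps N A then {0} else {})" by auto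
  then show ?thesis unfolding measure_pmf_of_set[OF ne fin] choice_prob_def card by simp
qed

lemma bij_betw_Un_subsets:
  assumes X: "finite X" and Y: "Y \<subseteq> X" and kn: "k \<le> n"
  shows "bij_betw (\<lambda>(T, U). T \<union> U)
           ({T. T \<subseteq> Y \<and> card T = k} \<times> {U. U \<subseteq> X - Y \<and> card U = n - k})
           {F \<in> {F. F \<subseteq> X \<and> card F = n}. card (F \<inter> Y) = k}"
proof (rule bij_betw_byWitness[where f'="\<lambda>F. (F \<inter> Y, F - Y)"])
  show "(\<lambda>(T, U). T \<union> U) ` ({T. T \<subseteq> Y \<and> card T = k} \<times> {U. U \<subseteq> X - Y \<and> card U = n - k})
      \<subseteq> {F \<in> {F. F \<subseteq> X \<and> card F = n}. card (F \<inter> Y) = k}"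
  proof (rule image_subsetI)
    fix p assume "p \<in> {T. T \<subseteq> Y \<and> card T = k} \<times> {U. U \<subseteq> X - Y \<and> card U = n - k}"
    then obtain T U where p: "p = (T, U)" and T: "T \<subseteq> Y" "card T = k" and U: "U \<subseteq> X - Y" "card U = n - k"
      by auto
    have "finite T" "finite U" using T U X Y by (auto intro: finite_subset)
    moreover have "T \<inter> U = {}" "(T \<union> U) \<inter> Y = T" using T U by blast+
    ultimately show "(\<lambda>(T, U). T \<union> U) p \<in> {F \<in> {F. F \<subseteq> X \<and> card F = n}. card (F \<inter> Y) = k}"
      using p T U Y kn by (auto simp: card_Un_disjoint)
  qed
  show "(\<lambda>F. (F \<inter> Y, F - Y)) ` {F \<in> {F. F \<subseteq> X \<and> card F = n}. card (F \<inter> Y) = k}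
      \<subseteq> {T. T \<subseteq> Y \<and> card T = k} \<times> {U. U \<subseteq> X - Y \<and> card U = n - k}"
  proof (rule image_subsetI)
    fix F assume "F \<in> {F \<in> {F. F \<subseteq> X \<and> card F = n}. card (F \<inter> Y) = k}"
    then have F: "F \<subseteq> X" "card F = n" "card (F \<inter> Y) = k" by auto
    have "finite F" using F X by (auto intro: finite_subset)
    then have "card (F - Y) = card F - card (F \<inter> Y)" by (metis card_Diff_subset_Int inf_commute Diff_Int2 Int_absorb finite_Int)
    then show "(F \<inter> Y, F - Y) \<in> {T. T \<subseteq> Y \<and> card T = k} \<times> {U. U \<subseteq> X - Y \<and> card U = n - k}"
      using F by auto
  qed
qed auto

lemma sum_subsets_by_intersection:
  assumes X: "finite X" and Y: "Y \<subseteq> X" and kn: "k \<le> n"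
  shows "(\<Sum>F\<in>{F. F \<subseteq> X \<and> card F = n}. if card (F \<inter> Y) = k then h (F \<inter> Y) else 0)
       = real (card (X - Y) choose (n - k)) * (\<Sum>T\<in>{T. T \<subseteq> Y \<and> card T = k}. (h T :: real))"
proof -
  let ?Ts = "{T. T \<subseteq> Y \<and> card T = k}" and ?Us = "{U. U \<subseteq> X - Y \<and> card U = n - k}"
  have "finite {F. F \<subseteq> X \<and> card F = n}" using X by simp
  then have "(\<Sum>F\<in>{F. F \<subseteq> X \<and> card F = n}. if card (F \<inter> Y) = k then h (F \<inter> Y) else 0)
      = (\<Sum>F\<in>{F \<in> {F. F \<subseteq> X \<and> card F = n}. card (F \<inter> Y) = k}. h (F \<inter> Y))"
    by (rule sum.inter_filter[symmetric])
  also have "\<dots> = (\<Sum>(T, U)\<in>?Ts \<times> ?Us. h ((T \<union> U) \<inter> Y))"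
    using sum.reindex_bij_betw[OF bij_betw_Un_subsets[OF X Y kn], of "\<lambda>F. h (F \<inter> Y)"]
    by (simp add: case_prod_unfold)
  also have "\<dots> = (\<Sum>(T, U)\<in>?Ts \<times> ?Us. h T)"
    by (rule sum.cong) (auto intro!: arg_cong[where f=h])
  also have "\<dots> = real (card ?Us) * (\<Sum>T\<in>?Ts. h T)"
    by (simp add: sum.cartesian_product[symmetric] sum_distrib_left)
  finally show ?thesis using n_subsets[of "X - Y" "n - k"] X by simp
qed
definition fanout_sets :: "nat \<Rightarrow> nat \<Rightarrow> nat \<Rightarrow> nat set set" where
  "fanout_sets N S l = {B. B \<subseteq> {1..N-1} - {S} \<and> card B = l - 1}"

definition sender_sum :: "nat \<Rightarrow> nat \<Rightarrow> nat \<Rightarrow> (nat set \<Rightarrow> real) \<Rightarrow> nat \<Rightarrow> nat \<Rightarrow> real" where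
  "sender_sum N Lam ell g l S =
     (\<Sum>F0\<in>fanout_sets N S l. if card (insert N F0 \<inter> lattice N Lam) = ell
                               then g (insert S (insert N F0 \<inter> lattice N Lam)) else 0)"

lemma card_fanout_sets:
  assumes "S \<in> {1..N-1}"
  shows "card (fanout_sets N S l) = (N - 2) choose (l - 1)"
proof -
  have "card ({1..N-1} - {S}) = N - 2" using assms by simp
  then show ?thesis unfolding fanout_sets_def using n_subsets[of "{1..N-1} - {S}" "l - 1"] by simp
qed

lemma fanout_sets_nonempty:
  assumes "S \<in> {1..N-1}" "l \<in> {1..N-1}"
  shows "fanout_sets N S l \<noteq> {}" "finite (fanout_sets N S l)"
proof -
  have "fanout_sets N S l \<subseteq> Pow ({1..N-1} - {S})" unfolding fanout_sets_def by blast
  then show fin: "finite (fanout_sets N S l)" by (rule finite_subset) simp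
  have "l - 1 \<le> N - 2" using assms(2) by arith
  then have "(N - 2) choose (l - 1) \<noteq> 0" by simp
  then show "fanout_sets N S l \<noteq> {}" using card_fanout_sets[OF assms(1), of l] by (metis card.empty)
qed

lemma sender_sum_eq:
  assumes NL: "N \<in> lattice N Lam" and S: "S \<in> {1..N-1}" and ell: "1 \<le> ell" and l: "1 \<le> l"
  shows "sender_sum N Lam ell w l S
       = (if ell \<le> l then real (card ({1..N-1} - {S} - (lattice N Lam - {N} - {S})) choose (l - ell))
              * (\<Sum>T\<in>{T. T \<subseteq> lattice N Lam - {N} - {S} \<and> card T = ell - 1}. w (insert S (insert N T)))
          else 0)"
proof -
  define X where "X = {1..N-1} - {S}"
  define Y where "Y = lattice N Lam - {N} - {S}"
  have YX: "Y \<subseteq> X" unfolding X_def Y_def lattice_def by auto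
  have fX: "finite X" unfolding X_def by simp
  have restrict: "(if card (insert N F0 \<inter> lattice N Lam) = ell then w (insert S (insert N F0 \<inter> lattice N Lam)) else 0)
      = (if card (F0 \<inter> Y) = ell - 1 then w (insert S (insert N (F0 \<inter> Y))) else 0)"
    if F0X: "F0 \<subseteq> X" for F0
  proof -
    have e1: "insert N F0 \<inter> lattice N Lam = insert N (F0 \<inter> Y)" using F0X NL unfolding X_def Y_def by auto
    have "finite (F0 \<inter> Y)" using F0X fX by (blast intro: finite_subset)
    moreover have "N \<notin> F0 \<inter> Y" unfolding Y_def by blast
    ultimately have "card (insert N (F0 \<inter> Y)) = card (F0 \<inter> Y) + 1" by simp
    then have "(card (insert N F0 \<inter> lattice N Lam) = ell) = (card (F0 \<inter> Y) = ell - 1)" unfolding e1 using ell by auto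
    then show ?thesis unfolding e1 by simp
  qed
  have "sender_sum N Lam ell w l S
      = (\<Sum>F0\<in>{B. B \<subseteq> X \<and> card B = l - 1}. if card (F0 \<inter> Y) = ell - 1 then w (insert S (insert N (F0 \<inter> Y))) else 0)"
    unfolding sender_sum_def fanout_sets_def X_def[symmetric] by (rule sum.cong[OF refl]) (simp add: restrict)
  also have "\<dots> = (if ell \<le> l then real (card (X - Y) choose (l - ell))
              * (\<Sum>T\<in>{T. T \<subseteq> Y \<and> card T = ell - 1}. w (insert S (insert N T))) else 0)"
  proof (cases "ell \<le> l")
    case True
    have "l - 1 - (ell - 1) = l - ell" using ell by simp
    then show ?thesis
      using sum_subsets_by_intersection[OF fX YX, of "ell - 1" "l - 1" "\<lambda>T. w (insert S (insert N T))"] True by simp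
  next
    case False
    have "card (F0 \<inter> Y) \<noteq> ell - 1" if F0: "F0 \<in> {B. B \<subseteq> X \<and> card B = l - 1}" for F0
    proof -
      have "finite F0" using F0 fX by (blast intro: finite_subset)
      then have "card (F0 \<inter> Y) \<le> card F0" by (intro card_mono) auto
      then show ?thesis using F0 False l by auto
    qed
    then show ?thesis using False by simp
  qed
  finally show ?thesis unfolding X_def Y_def .
qed

lemma off_lattice_le: assumes "x \<in> off_lattice N Lam" "N \<in> lattice N Lam" shows "x \<in> {1..N-1}"
proof -
  have "x \<noteq> N" using assms unfolding lattice_def off_lattice_def by auto
  then show ?thesis using assms(1) unfolding off_lattice_def by auto
qed

lemma senders_split:
  assumes NL: "N \<in> lattice N Lam"
  shows "{1..N-1} = (lattice N Lam - {N}) \<union> off_lattice N Lam" "(lattice N Lam - {N}) \<inter> off_lattice N Lam = {}"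
proof -
  have "off_lattice N Lam \<subseteq> {1..N-1}" using off_lattice_le[OF _ NL] by blast
  moreover have "lattice N Lam - {N} \<subseteq> {1..N-1}" unfolding lattice_def by auto
  moreover have "{1..N-1} \<subseteq> (lattice N Lam - {N}) \<union> off_lattice N Lam" unfolding lattice_def off_lattice_def by auto
  ultimately show "{1..N-1} = (lattice N Lam - {N}) \<union> off_lattice N Lam" by blast
  show "(lattice N Lam - {N}) \<inter> off_lattice N Lam = {}" unfolding lattice_def off_lattice_def by auto
qed

lemma bounds_combine:
  fixes lo hi a b C1 C2 Y1 Y2 :: real
  assumes "a \<ge> 0" "b \<ge> 0" "lo * C1 \<le> Y1" "Y1 \<le> hi * C1" "lo * C2 \<le> Y2" "Y2 \<le> hi * C2"
  shows "lo * (a * C1 + b * C2) \<le> a * Y1 + b * Y2 \<and> a * Y1 + b * Y2 \<le> hi * (a * C1 + b * C2)"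
proof -
  have "a * (lo * C1) \<le> a * Y1" "b * (lo * C2) \<le> b * Y2" "a * Y1 \<le> a * (hi * C1)" "b * Y2 \<le> b * (hi * C2)"
    using assms by (simp_all add: mult_left_mono)
  then show ?thesis by (simp add: algebra_simps)
qed

lemma sum_sender_sum_split:
  assumes NL: "N \<in> lattice N Lam" and ell: "1 \<le> ell" "ell \<le> l"
  shows "(\<Sum>S\<in>{1..N-1}. sender_sum N Lam ell w l S) =
      real (card (off_lattice N Lam) choose (l - ell)) *
        (\<Sum>S\<in>lattice N Lam - {N}. \<Sum>T\<in>{T. T \<subseteq> lattice N Lam - {N} - {S} \<and> card T = ell - 1}. w (insert S (insert N T)))
    + real ((card (off_lattice N Lam) - 1) choose (l - ell)) *
        (\<Sum>S\<in>off_lattice N Lam. \<Sum>T\<in>{T. T \<subseteq> lattice N Lam - {N} \<and> card T = ell - 1}. w (insert S (insert N T)))"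
proof -
  note split = senders_split[OF NL]
  have off_sub: "off_lattice N Lam \<subseteq> {1..N-1}" using off_lattice_le[OF _ NL] by blast
  have "(\<Sum>S\<in>{1..N-1}. sender_sum N Lam ell w l S)
      = (\<Sum>S\<in>lattice N Lam - {N}. sender_sum N Lam ell w l S) + (\<Sum>S\<in>off_lattice N Lam. sender_sum N Lam ell w l S)"
    unfolding split(1) by (rule sum.union_disjoint) (use split(2) finite_lattice finite_off_lattice in auto)
  also have "(\<Sum>S\<in>lattice N Lam - {N}. sender_sum N Lam ell w l S)
      = (\<Sum>S\<in>lattice N Lam - {N}. real (card (off_lattice N Lam) choose (l - ell)) *
           (\<Sum>T\<in>{T. T \<subseteq> lattice N Lam - {N} - {S} \<and> card T = ell - 1}. w (insert S (insert N T))))"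
  proof (rule sum.cong[OF refl])
    fix S assume S: "S \<in> lattice N Lam - {N}"
    have "{1..N-1} - {S} - (lattice N Lam - {N} - {S}) = off_lattice N Lam"
      using S off_sub unfolding lattice_def off_lattice_def by auto
    moreover have "S \<in> {1..N-1}" using S split by blast
    ultimately show "sender_sum N Lam ell w l S = real (card (off_lattice N Lam) choose (l - ell)) *
           (\<Sum>T\<in>{T. T \<subseteq> lattice N Lam - {N} - {S} \<and> card T = ell - 1}. w (insert S (insert N T)))"
      using sender_sum_eq[OF NL _ ell(1), of S l w] ell by simp
  qed
  also have "(\<Sum>S\<in>off_lattice N Lam. sender_sum N Lam ell w l S)
      = (\<Sum>S\<in>off_lattice N Lam. real ((card (off_lattice N Lam) - 1) choose (l - ell)) *
           (\<Sum>T\<in>{T. T \<subseteq> lattice N Lam - {N} \<and> card T = ell - 1}. w (insert S (insert N T))))"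
  proof (rule sum.cong[OF refl])
    fix S assume S: "S \<in> off_lattice N Lam"
    have "{1..N-1} - {S} - (lattice N Lam - {N} - {S}) = off_lattice N Lam - {S}"
      using S off_sub unfolding lattice_def off_lattice_def by auto
    moreover have "card (off_lattice N Lam - {S}) = card (off_lattice N Lam) - 1"
      using S finite_off_lattice by simp
    moreover have "lattice N Lam - {N} - {S} = lattice N Lam - {N}"
      using S unfolding lattice_def off_lattice_def by auto
    moreover have "S \<in> {1..N-1}" using S split by blast
    ultimately show "sender_sum N Lam ell w l S = real ((card (off_lattice N Lam) - 1) choose (l - ell)) *
           (\<Sum>T\<in>{T. T \<subseteq> lattice N Lam - {N} \<and> card T = ell - 1}. w (insert S (insert N T)))"
      using sender_sum_eq[OF NL _ ell(1), of S l w] ell by simp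
  qed
  finally show ?thesis by (simp add: sum_distrib_left)
qed

lemma sender_sum_bounds:
  assumes L: "0 < Lam" "Lam dvd N" "0 < N" "N = e * Lam" and ell: "1 \<le> ell" "ell \<le> e" and l: "1 \<le> l"
  defines "lo \<equiv> 1 / (real ell + 1) * (1 - 1 / (real ell * real e))"
    and "hi \<equiv> 1 / (real ell + 1) * (1 + 1 / real e)"
  shows "lo * (\<Sum>S\<in>{1..N-1}. sender_sum N Lam ell (\<lambda>_. 1) l S)
           \<le> (\<Sum>S\<in>{1..N-1}. sender_sum N Lam ell (\<lambda>A. choice_prob N A N) l S)
       \<and> (\<Sum>S\<in>{1..N-1}. sender_sum N Lam ell (\<lambda>A. choice_prob N A N) l S)
           \<le> hi * (\<Sum>S\<in>{1..N-1}. sender_sum N Lam ell (\<lambda>_. 1) l S)"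
proof (cases "ell \<le> l")
  case False
  have NL: "N \<in> lattice N Lam" by (rule hotspot_in_lattice[OF L(1-3)])
  have "sender_sum N Lam ell w l S = 0" if "S \<in> {1..N-1}" for w S
    using sender_sum_eq[OF NL that ell(1) l] False by simp
  then show ?thesis by simp
next
  case True
  have NL: "N \<in> lattice N Lam" by (rule hotspot_in_lattice[OF L(1-3)])
  have k1: "ell - 1 + 1 = ell" using ell by simp
  define Y where "Y w = (\<Sum>S\<in>lattice N Lam - {N}.
      \<Sum>T\<in>{T. T \<subseteq> lattice N Lam - {N} - {S} \<and> card T = ell - 1}. w (insert S (insert N T)))" for w :: "nat set \<Rightarrow> real"
  define X where "X w = (\<Sum>S\<in>off_lattice N Lam.
      \<Sum>T\<in>{T. T \<subseteq> lattice N Lam - {N} \<and> card T = ell - 1}. w (insert S (insert N T)))" for w :: "nat set \<Rightarrow> real"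
  have lo_le: "lo \<le> 1 / (real ell + 1)" and le_hi: "1 / (real ell + 1) \<le> hi"
    unfolding lo_def hi_def by (simp_all add: divide_right_mono)
  have lattice_exact: "(real ell + 1) * Y (\<lambda>A. choice_prob N A N) = Y (\<lambda>_. 1)"
    unfolding Y_def by (rule lattice_sender_exact[OF L ell])
  have Y_nonneg: "0 \<le> Y (\<lambda>_. 1)" unfolding Y_def by (simp add: sum_nonneg)
  have "Y (\<lambda>A. choice_prob N A N) = 1 / (real ell + 1) * Y (\<lambda>_. 1)"
    using lattice_exact by (simp add: field_simps)
  then have lattice_bounds: "lo * Y (\<lambda>_. 1) \<le> Y (\<lambda>A. choice_prob N A N)"
      "Y (\<lambda>A. choice_prob N A N) \<le> hi * Y (\<lambda>_. 1)"
    using mult_right_mono[OF lo_le Y_nonneg] mult_right_mono[OF le_hi Y_nonneg] by simp_all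
  have "X (\<lambda>A. choice_prob N A N)
      = (\<Sum>S\<in>off_lattice N Lam. \<Sum>T\<in>lattice_subsets_at N Lam ell N. choice_prob N (insert S T) N)"
    unfolding X_def
  proof (rule sum.cong[OF refl])
    fix S
    show "(\<Sum>T\<in>{T. T \<subseteq> lattice N Lam - {N} \<and> card T = ell - 1}. choice_prob N (insert S (insert N T)) N)
        = (\<Sum>T\<in>lattice_subsets_at N Lam ell N. choice_prob N (insert S T) N)"
      using sum_insert_hotspot_reindex[OF NL, where k="ell - 1" and g="\<lambda>W. choice_prob N (insert S W) N"] k1
      by simp
  qed
  moreover have "X (\<lambda>_. 1) = real (card (off_lattice N Lam)) * real (card (lattice_subsets_at N Lam ell N))"
    unfolding X_def using sum_insert_hotspot_reindex[OF NL, where k="ell - 1" and g="\<lambda>W. 1"] k1 by simp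
  ultimately have off_bounds: "lo * X (\<lambda>_. 1) \<le> X (\<lambda>A. choice_prob N A N)"
      "X (\<lambda>A. choice_prob N A N) \<le> hi * X (\<lambda>_. 1)"
    using off_sender_bounds[OF L ell] unfolding lo_def hi_def by (simp_all add: mult.assoc)
  show ?thesis
    unfolding sum_sender_sum_split[OF NL ell(1) True]
    by (rule bounds_combine) (use lattice_bounds off_bounds in \<open>simp_all add: X_def Y_def\<close>)
qed

lemma measure_bind_pmf:
  "measure_pmf.prob (bind_pmf p f) A = measure_pmf.expectation p (\<lambda>x. measure_pmf.prob (f x) A)"
  unfolding measure_pmf_bind
proof (rule measure_pmf.measure_bind[where N="count_space UNIV"])
  show "(\<lambda>x. measure_pmf (f x)) \<in> measure_pmf p \<rightarrow>\<^sub>M subprob_algebra (count_space UNIV)"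
    by (auto simp: measurable_def space_subprob_algebra sets_measure_pmf_count_space
                 prob_space_imp_subprob_space measure_pmf.prob_space_axioms)
qed simp

lemma measure_cond_pmf:
  assumes "measure_pmf.prob p s > 0"
  shows "measure_pmf.prob (cond_pmf p s) A = measure_pmf.prob p (s \<inter> A) / measure_pmf.prob p s"
proof -
  have ne: "set_pmf p \<inter> s \<noteq> {}" using assms measure_pmf_zero_iff[of p s] by auto
  have z: "emeasure (measure_pmf p) s \<noteq> 0" by (rule emeasure_measure_pmf_not_zero[OF ne])
  have i: "emeasure (measure_pmf p) s \<noteq> \<infinity>" using measure_pmf.emeasure_finite[of p s] by (simp add: top_ennreal_def)
  show ?thesis unfolding cond_pmf.rep_eq[OF ne] by (rule measure_uniform_measure[OF z i]) simp
qed

lemma prob_hotspot_traffic: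
  assumes N: "2 \<le> N" and nu: "set_pmf \<nu> \<subseteq> {1..N-1}"
  shows "measure_pmf.prob (hotspot_traffic N Lam \<nu>) Q =
    (\<Sum>l\<in>{1..N-1}. pmf \<nu> l / real ((N - 2) choose (l - 1)) *
       (\<Sum>S\<in>{1..N-1}. \<Sum>F0\<in>fanout_sets N S l.
          measure_pmf.prob (pmf_of_set (largest_gap_starts N (insert S (insert N F0 \<inter> homed N Lam Lam))))
             ((\<lambda>G. (S, insert N F0, G)) -` Q)))
    / real (N - 1)"
proof -
  define P where "P S F0 = measure_pmf.prob (pmf_of_set (largest_gap_starts N (insert S (insert N F0 \<inter> homed N Lam Lam))))
             ((\<lambda>G. (S, insert N F0, G)) -` Q)" for S F0
  have "measure_pmf.prob (hotspot_traffic N Lam \<nu>) Q =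
      measure_pmf.expectation (pmf_of_set {1..N-1}) (\<lambda>S. measure_pmf.expectation \<nu> (\<lambda>l.
        measure_pmf.expectation (pmf_of_set (fanout_sets N S l)) (\<lambda>F0. P S F0)))"
    unfolding hotspot_traffic_def measure_bind_pmf map_pmf_def[symmetric] measure_map_pmf P_def fanout_sets_def ..
  also have "\<dots> = (\<Sum>S\<in>{1..N-1}. \<Sum>l\<in>{1..N-1}. pmf \<nu> l / real ((N - 2) choose (l - 1)) * (\<Sum>F0\<in>fanout_sets N S l. P S F0))
      / real (N - 1)"
  proof -
    have "measure_pmf.expectation \<nu> (\<lambda>l. measure_pmf.expectation (pmf_of_set (fanout_sets N S l)) (\<lambda>F0. P S F0))
        = (\<Sum>l\<in>{1..N-1}. pmf \<nu> l / real ((N - 2) choose (l - 1)) * (\<Sum>F0\<in>fanout_sets N S l. P S F0))"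
      if S: "S \<in> {1..N-1}" for S
    proof -
      have "measure_pmf.expectation \<nu> (\<lambda>l. measure_pmf.expectation (pmf_of_set (fanout_sets N S l)) (\<lambda>F0. P S F0))
          = (\<Sum>l\<in>{1..N-1}. (\<Sum>F0\<in>fanout_sets N S l. P S F0) / real (card (fanout_sets N S l)) * pmf \<nu> l)"
        by (subst integral_measure_pmf_real[where A="{1..N-1}"])
          (use nu fanout_sets_nonempty[OF S] in \<open>auto simp: integral_pmf_of_set\<close>)
      then show ?thesis by (simp add: card_fanout_sets[OF S] divide_inverse ac_simps)
    qed
    moreover have "{1..N-1} \<noteq> {}" using N by simp
    ultimately show ?thesis by (simp add: integral_pmf_of_set)
  qed
  also have "\<dots> = (\<Sum>l\<in>{1..N-1}. pmf \<nu> l / real ((N - 2) choose (l - 1)) * (\<Sum>S\<in>{1..N-1}. \<Sum>F0\<in>fanout_sets N S l. P S F0))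
      / real (N - 1)"
    by (subst sum.swap) (simp only: sum_distrib_left)
  finally show ?thesis unfolding P_def .
qed

lemma active_set_props:
  fixes F0 :: "nat set"
  assumes NL: "N \<in> lattice N Lam" and S: "S \<in> {1..N-1}"
  defines "A \<equiv> insert S (insert N F0 \<inter> lattice N Lam)"
  shows "A \<subseteq> {1..N}" "finite A" "2 \<le> card A" "N \<in> A"
proof -
  show "A \<subseteq> {1..N}" "finite A" "N \<in> A"
    using S NL finite_lattice[of N Lam] unfolding A_def lattice_def by auto
  moreover have "{S, N} \<subseteq> A" using NL unfolding A_def by blast
  ultimately have "card {S, N} \<le> card A" by (intro card_mono)
  moreover have "S \<noteq> N" using S by auto
  ultimately show "2 \<le> card A" by simp
qed

lemma prob_hotspot_traffic_sender_sum:
  assumes L: "0 < Lam" "Lam dvd N" "2 \<le> N" and nu: "set_pmf \<nu> \<subseteq> {1..N-1}"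
    and Q: "\<And>S F0. S \<in> {1..N-1} \<Longrightarrow>
      measure_pmf.prob (pmf_of_set (largest_gap_starts N (insert S (insert N F0 \<inter> lattice N Lam))))
        ((\<lambda>G. (S, insert N F0, G)) -` Q)
      = (if card (insert N F0 \<inter> lattice N Lam) = ell then g (insert S (insert N F0 \<inter> lattice N Lam)) else 0)"
  shows "measure_pmf.prob (hotspot_traffic N Lam \<nu>) Q =
    (\<Sum>l\<in>{1..N-1}. pmf \<nu> l / real ((N - 2) choose (l - 1)) * (\<Sum>S\<in>{1..N-1}. sender_sum N Lam ell g l S))
    / real (N - 1)"
proof -
  have "(\<Sum>F0\<in>fanout_sets N S l.
          measure_pmf.prob (pmf_of_set (largest_gap_starts N (insert S (insert N F0 \<inter> lattice N Lam))))
            ((\<lambda>G. (S, insert N F0, G)) -` Q))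
      = sender_sum N Lam ell g l S" if "S \<in> {1..N-1}" for S l
    unfolding sender_sum_def using Q[OF that] by simp
  then show ?thesis unfolding prob_hotspot_traffic[OF L(3) nu] homed_eq_lattice[OF L(1,2)] by simp
qed

lemma cond_prob_hotspot_gap0:
  assumes L: "0 < Lam" "Lam dvd N" "2 \<le> N" and nu: "set_pmf \<nu> \<subseteq> {1..N-1}"
    and pos: "measure_pmf.prob (hotspot_traffic N Lam \<nu>) {\<omega>. card (fst (snd \<omega>) \<inter> homed N Lam Lam) = ell} > 0"
  shows "measure_pmf.prob (cond_pmf (hotspot_traffic N Lam \<nu>) {\<omega>. card (fst (snd \<omega>) \<inter> homed N Lam Lam) = ell})
           {\<omega>. snd (snd \<omega>) = 0}
    = (\<Sum>l\<in>{1..N-1}. pmf \<nu> l / real ((N - 2) choose (l - 1)) *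
         (\<Sum>S\<in>{1..N-1}. sender_sum N Lam ell (\<lambda>A. choice_prob N A N) l S))
    / (\<Sum>l\<in>{1..N-1}. pmf \<nu> l / real ((N - 2) choose (l - 1)) *
         (\<Sum>S\<in>{1..N-1}. sender_sum N Lam ell (\<lambda>_. 1) l S))"
proof -
  have NL: "N \<in> lattice N Lam" using L unfolding lattice_def by auto
  define C where "C = {\<omega>::nat \<times> nat set \<times> nat. card (fst (snd \<omega>) \<inter> homed N Lam Lam) = ell}"
  have prob_C: "measure_pmf.prob (hotspot_traffic N Lam \<nu>) C =
    (\<Sum>l\<in>{1..N-1}. pmf \<nu> l / real ((N - 2) choose (l - 1)) * (\<Sum>S\<in>{1..N-1}. sender_sum N Lam ell (\<lambda>_. 1) l S))
    / real (N - 1)"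
    by (rule prob_hotspot_traffic_sender_sum[OF L nu]) (auto simp: C_def homed_eq_lattice[OF L(1,2)])
  have prob_C_gap0: "measure_pmf.prob (hotspot_traffic N Lam \<nu>) (C \<inter> {\<omega>. snd (snd \<omega>) = 0}) =
    (\<Sum>l\<in>{1..N-1}. pmf \<nu> l / real ((N - 2) choose (l - 1)) *
       (\<Sum>S\<in>{1..N-1}. sender_sum N Lam ell (\<lambda>A. choice_prob N A N) l S))
    / real (N - 1)"
  proof (rule prob_hotspot_traffic_sender_sum[OF L nu])
    fix S F0 assume S: "S \<in> {1..N-1}"
    have "(\<lambda>G. (S, insert N F0, G)) -` (C \<inter> {\<omega>. snd (snd \<omega>) = 0})
        = (if card (insert N F0 \<inter> lattice N Lam) = ell then {0} else {})"
      by (auto simp: C_def homed_eq_lattice[OF L(1,2)])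
    then show "measure_pmf.prob (pmf_of_set (largest_gap_starts N (insert S (insert N F0 \<inter> lattice N Lam))))
        ((\<lambda>G. (S, insert N F0, G)) -` (C \<inter> {\<omega>. snd (snd \<omega>) = 0}))
      = (if card (insert N F0 \<inter> lattice N Lam) = ell then choice_prob N (insert S (insert N F0 \<inter> lattice N Lam)) N else 0)"
      using largest_gap_starts_props[OF active_set_props[OF NL S]] by simp
  qed
  show ?thesis
    using measure_cond_pmf[OF pos[folded C_def]] prob_C prob_C_gap0 L(3) unfolding C_def by simp
qed

lemma ratio_of_weighted_sums_bounds:
  fixes w n d :: "'a \<Rightarrow> real"
  assumes "\<And>i. i \<in> I \<Longrightarrow> 0 \<le> w i" "\<And>i. i \<in> I \<Longrightarrow> lo * d i \<le> n i \<and> n i \<le> hi * d i"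
    and pos: "0 < (\<Sum>i\<in>I. w i * d i)"
  shows "lo \<le> (\<Sum>i\<in>I. w i * n i) / (\<Sum>i\<in>I. w i * d i) \<and> (\<Sum>i\<in>I. w i * n i) / (\<Sum>i\<in>I. w i * d i) \<le> hi"
proof -
  have "lo * (\<Sum>i\<in>I. w i * d i) = (\<Sum>i\<in>I. w i * (lo * d i))" by (simp add: sum_distrib_left algebra_simps)
  also have "\<dots> \<le> (\<Sum>i\<in>I. w i * n i)" using assms(1,2) by (intro sum_mono mult_left_mono) auto
  finally have "lo * (\<Sum>i\<in>I. w i * d i) \<le> (\<Sum>i\<in>I. w i * n i)" .
  moreover have "(\<Sum>i\<in>I. w i * n i) \<le> (\<Sum>i\<in>I. w i * (hi * d i))"
    using assms(1,2) by (intro sum_mono mult_left_mono) auto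
  then have "(\<Sum>i\<in>I. w i * n i) \<le> hi * (\<Sum>i\<in>I. w i * d i)" by (simp add: sum_distrib_left algebra_simps)
  ultimately show ?thesis using pos by (simp add: le_divide_eq divide_le_eq)
qed

theorem proposition5p1:
  fixes N Lam ell :: nat and \<nu> :: "nat pmf"
  assumes "Lam > 0" and "Lam dvd N" and "N \<ge> 2"
    and "set_pmf \<nu> \<subseteq> {1..N-1}"
    and "ell \<in> {1..N div Lam}"
    and "measure_pmf.prob (hotspot_traffic N Lam \<nu>)
           {\<omega>. card (fst (snd \<omega>) \<inter> homed N Lam Lam) = ell} > 0"
  shows "1 / (real ell + 1) * (1 - 1 / (real ell * real (N div Lam)))
           \<le> measure_pmf.prob (cond_pmf (hotspot_traffic N Lam \<nu>)
                 {\<omega>. card (fst (snd \<omega>) \<inter> homed N Lam Lam) = ell}) {\<omega>. snd (snd \<omega>) = 0}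
       \<and> measure_pmf.prob (cond_pmf (hotspot_traffic N Lam \<nu>)
                 {\<omega>. card (fst (snd \<omega>) \<inter> homed N Lam Lam) = ell}) {\<omega>. snd (snd \<omega>) = 0}
           \<le> 1 / (real ell + 1) * (1 + 1 / real (N div Lam))"
proof -
  obtain e where e: "N = e * Lam" using assms(2) by (metis dvd_def mult.commute)
  have "0 < N" using assms(3) by linarith
  note L = assms(1,2) this e
  have ed: "N div Lam = e" using assms(1) e by simp
  have ell: "1 \<le> ell" "ell \<le> e" using assms(5) ed by auto
  have "0 < (\<Sum>l\<in>{1..N-1}. pmf \<nu> l / real ((N - 2) choose (l - 1)) *
             (\<Sum>S\<in>{1..N-1}. sender_sum N Lam ell (\<lambda>_. 1) l S))"
    using assms(6) prob_hotspot_traffic_sender_sum[OF assms(1-4), where ell=ell and g="\<lambda>_. 1"]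
    by (fastforce simp: homed_eq_lattice[OF L(1,2)] zero_less_divide_iff)
  then show ?thesis
    unfolding cond_prob_hotspot_gap0[OF assms(1-4,6)] ed
    by (intro ratio_of_weighted_sums_bounds sender_sum_bounds[OF L ell]) auto
qed

end
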